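(* In the setting of the FedSLoP algorithm (see context), under Assumptions A1 and A2, suppose $$\eta\le\min\Big\{\sqrt{\tfrac{1-\mu^2}{6L^2\tau^3}},\ \tfrac{1}{LS_\tau}\Big\}.$$ Then for every round $t$, $$\mathbb{E}_t[f(\theta^{t+1})]\le f(\theta^t)-\Big(\frac{\underline{\delta}}{2}\eta S_\tau-\frac{12L^2\tau^4\eta^3}{(1-\mu)(1-\mu^2)}\Big)\|\nabla f(\theta^t)\|^2+\frac{\eta^2S_\tau^2L\sigma_L^2}{N}+\frac{12L^2\tau^4\eta^3}{\underline{\delta}(1-\mu)(1-\mu^2)}(\sigma_L^2+\sigma_G^2).$$
   Context: Setting. Let $d,N,\tau$ be positive integers, $r$ an integer with $1\le r\le d$, $\underline{\delta}:=r/d\in(0,1]$, $\mu\in[0,1)$, $\eta>0$, $L>0$. Let $F_1,\dots,F_N:\mathbb{R}^d\to\mathbb{R}$ be differentiable and $f(\theta):=\frac1N\sum_{i=1}^N F_i(\theta)$. Assumption A1: $f$ is bounded below by $f_*>-\infty$, and $f$ and every $F_i$ are $L$-smooth (gradients $L$-Lipschitz). Assumption A2: each stochastic gradient $g_{i,s}=\nabla F_i(\theta_{i,s};\xi_{i,s})$ computed by the algorithm satisfies, conditionally on all randomness generated before it (including $\Pi_t$ and $\theta_{i,s}$), $\mathbb{E}[g_{i,s}]=\nabla F_i(\theta_{i,s})$ and $\mathbb{E}\|g_{i,s}-\nabla F_i(\theta_{i,s})\|^2\le\sigma_L^2$, the minibatch samples of different clients are conditionally independent; and $\|\nabla F_i(\theta)-\nabla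 f(\theta)\|^2\le\sigma_G^2$ for all $i$ and all $\theta\in\mathbb{R}^d$. Algorithm (FedSLoP, full participation). Start from $\theta^0\in\mathbb{R}^d$. In each round $t=0,1,\dots$: sample $P_t$ from the Haar (uniform, $O(d)$-invariant) distribution on $\mathrm{St}(d,r)=\{P\in\mathbb{R}^{d\times r}:P^\top P=I_r\}$, independently of all past randomness and of data sampling, and set $\Pi_t=P_tP_t^\top$. Each client $i=1,\dots,N$ sets $\theta_{i,0}=\theta^t$, $v_{i,0}=0$, and for $s=0,\dots,\tau-1$: $v_{i,s+1}=\mu v_{i,s}+\Pi_t g_{i,s}$, $\theta_{i,s+1}=\theta_{i,s}-\eta v_{i,s+1}$. The server sets $\theta^{t+1}=\theta^t+\frac1N\sum_{i=1}^N(\theta_{i,\tau}-\theta^t)$. Notation. $\mathbb{E}_t[\cdot]$ is the conditional expectation given $\theta^t$ and all randomness up to the start of round $t$ (so it averages over $\Pi_t$ and the round-$t$ minibatches). The momentum weights are $\alpha_{\tau,q}:=(1-\mu^{\tau-q})/(1-\mu)$ for $q=0,\dots,\tau-1$, and $S_\tau:=\sum_{q=0}^{\tau-1}\alpha_{\tau,q}$. *)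

theory Defs
  imports "HOL-Analysis.Analysis" "HOL-Probability.Probability"
begin

definition stiefel :: "(real^'r^'d) set" where
  "stiefel = {P. transpose P ** P = mat 1}"

definition haar_stiefel :: "(real^'r^'d) measure \<Rightarrow> bool" where
  "haar_stiefel Q \<longleftrightarrow> prob_space Q \<and> sets Q = sets borel \<and> stiefel \<in> sets Q \<and>
     emeasure Q stiefel = 1 \<and>
     (\<forall>U::real^'d^'d. orthogonal_matrix U \<longrightarrow> distr Q borel (\<lambda>P. U ** P) = Q)"

text \<open>Local FedSLoP client iteration with projection Pi, step eta, momentum mu, stochastic
  gradient sequence g (g s = g_{i,s}), start theta0.  Returns (theta_{i,s}, v_{i,s}).\<close>
fun local_iter :: "real \<Rightarrow> real \<Rightarrow> real^'d^'d \<Rightarrow> (nat \<Rightarrow> real^'d) \<Rightarrow> real^'d \<Rightarrow> nat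
    \<Rightarrow> (real^'d) \<times> (real^'d)" where
  "local_iter \<eta> \<mu> Proj g \<theta>0 0 = (\<theta>0, 0)"
| "local_iter \<eta> \<mu> Proj g \<theta>0 (Suc s) =
     (let v' = \<mu> *\<^sub>R snd (local_iter \<eta> \<mu> Proj g \<theta>0 s) + Proj *v g s
      in (fst (local_iter \<eta> \<mu> Proj g \<theta>0 s) - \<eta> *\<^sub>R v', v'))"

definition alpha_w :: "real \<Rightarrow> nat \<Rightarrow> nat \<Rightarrow> real" where
  "alpha_w \<mu> \<tau> q = (1 - \<mu> ^ (\<tau> - q)) / (1 - \<mu>)"

definition S_tau :: "real \<Rightarrow> nat \<Rightarrow> real" where
  "S_tau \<mu> \<tau> = (\<Sum>q<\<tau>. alpha_w \<mu> \<tau> q)"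

definition L_smooth :: "real \<Rightarrow> ('a::real_inner \<Rightarrow> real) \<Rightarrow> ('a \<Rightarrow> 'a) \<Rightarrow> bool" where
  "L_smooth L h gh \<longleftrightarrow> (\<forall>x. GDERIV h x :> gh x) \<and> (\<forall>x y. norm (gh x - gh y) \<le> L * norm (x - y))"

text \<open>Information available when g_{i,s} is computed: the projection P and all stochastic
  gradients of client i from earlier local steps, together with all stochastic gradients of
  the other clients.\<close>
definition info_sigma :: "'w measure \<Rightarrow> ('w \<Rightarrow> real^'r^'d) \<Rightarrow> (nat \<Rightarrow> nat \<Rightarrow> 'w \<Rightarrow> real^'d)
    \<Rightarrow> nat \<Rightarrow> nat \<Rightarrow> nat \<Rightarrow> nat \<Rightarrow> 'w measure" where
  "info_sigma M P g N \<tau> i s = sigma (space M)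
     ({P -` A \<inter> space M | A. A \<in> sets borel} \<union>
      {g j s' -` A \<inter> space M | j s' A. j < N \<and> s' < \<tau> \<and> (j \<noteq> i \<or> s' < s) \<and> A \<in> sets borel})"

end

theory Submission
  imports Defs
begin

text \<open>Unrolling the heavy-ball recursion, client \<open>i\<close> moves by \<open>-\<eta> \<Pi> \<Sum>\<^sub>q \<alpha>\<^sub>q g\<^sub>i\<^sub>,\<^sub>q\<close>, so the
  server step is \<open>-\<eta> \<Pi> (S a + b)\<close>, where \<open>a\<close> averages the exact gradients
  \<open>\<nabla>F\<^sub>i(\<theta>\<^sub>i\<^sub>,\<^sub>q)\<close> and \<open>b\<close> averages the gradient noises, both with weights \<open>\<alpha>\<^sub>q\<close>.
  The descent lemma for \<open>f\<close>, together with \<open>\<Pi>\<close> being an orthogonal projection and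
  \<open>L \<eta> S \<le> 1\<close>, bounds \<open>f(\<theta>\<^sup>t\<^sup>+\<^sup>1)\<close> pointwise by
  \<open>f(\<theta>\<^sup>t) - \<eta>S/2 \<langle>\<nabla>f, \<Pi>\<nabla>f\<rangle> + \<eta>S \<parallel>a - \<nabla>f\<parallel>\<^sup>2 + (linear in b) + L\<eta>\<^sup>2 \<parallel>b\<parallel>\<^sup>2\<close>.
  Taking expectations: invariance of the Haar measure under coordinate reflections and swaps
  gives \<open>E \<Pi> = (r/d) I\<close>; the noises are martingale differences for the information
  \<open>\<sigma>\<close>-algebras, so the linear term vanishes and the noises are orthogonal in \<open>L\<^sup>2\<close>;
  and \<open>\<parallel>a - \<nabla>f\<parallel>\<^sup>2\<close> is controlled by the client drift \<open>E \<parallel>\<theta>\<^sub>i\<^sub>,\<^sub>q - \<theta>\<^sup>t\<parallel>\<^sup>2\<close>, which a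
  strong induction over \<open>q\<close> bounds using \<open>6 L\<^sup>2 \<tau>\<^sup>3 \<eta>\<^sup>2 \<le> 1 - \<mu>\<^sup>2\<close>.\<close>

section \<open>Smooth functions and elementary inequalities\<close>

lemma GDERIV_has_real_derivative_along_line:
  fixes h :: "'a::real_inner \<Rightarrow> real"
  assumes "\<And>y. GDERIV h y :> gh y"
  shows "((\<lambda>t. h (x + t *\<^sub>R u)) has_real_derivative (gh (x + t *\<^sub>R u) \<bullet> u)) (at t)"
proof -
  have h: "(h has_derivative (\<lambda>v. v \<bullet> gh (x + t *\<^sub>R u))) (at (x + t *\<^sub>R u))"
    using assms unfolding gderiv_def by simp
  have line: "((\<lambda>t. x + t *\<^sub>R u) has_derivative (\<lambda>s. s *\<^sub>R u)) (at t)"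
    by (auto intro!: derivative_eq_intros)
  show ?thesis
    using has_derivative_compose[OF line h] unfolding has_field_derivative_def
    by (rule has_derivative_eq_rhs) (auto simp: inner_commute fun_eq_iff)
qed

lemma L_smooth_upper_bound:
  fixes h :: "'a::real_inner \<Rightarrow> real"
  assumes "L_smooth L h gh"
  shows "h (x + u) \<le> h x + gh x \<bullet> u + L / 2 * (norm u)\<^sup>2"
proof -
  have der: "\<And>y. GDERIV h y :> gh y" and lip: "\<And>a b. norm (gh a - gh b) \<le> L * norm (a - b)"
    using assms unfolding L_smooth_def by auto
  define \<phi> where "\<phi> t = h (x + t *\<^sub>R u) - t * (gh x \<bullet> u) - L / 2 * t\<^sup>2 * (norm u)\<^sup>2" for t
  define \<phi>' where "\<phi>' t = gh (x + t *\<^sub>R u) \<bullet> u - gh x \<bullet> u - L * t * (norm u)\<^sup>2" for t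
  have "(\<phi> has_real_derivative \<phi>' t) (at t)" for t
    unfolding \<phi>_def \<phi>'_def
    by (rule derivative_eq_intros GDERIV_has_real_derivative_along_line[OF der] refl)+ simp
  then obtain z where z: "0 < z" "z < 1" "\<phi> 1 - \<phi> 0 = \<phi>' z"
    using MVT2[of 0 1 \<phi> \<phi>'] by auto
  have "\<phi>' z = (gh (x + z *\<^sub>R u) - gh x) \<bullet> u - L * z * (norm u)\<^sup>2"
    unfolding \<phi>'_def by (simp add: inner_diff_left)
  also have "\<dots> \<le> norm (gh (x + z *\<^sub>R u) - gh x) * norm u - L * z * (norm u)\<^sup>2"
    using norm_cauchy_schwarz[of "gh (x + z *\<^sub>R u) - gh x" u] by linarith
  also have "\<dots> \<le> L * norm (z *\<^sub>R u) * norm u - L * z * (norm u)\<^sup>2"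
    using lip[of "x + z *\<^sub>R u" x] by (simp add: mult_right_mono)
  also have "\<dots> = 0" using z by (simp add: power2_eq_square)
  finally have "\<phi> 1 \<le> \<phi> 0" using z by simp
  then show ?thesis unfolding \<phi>_def by simp
qed

lemma L_smooth_uminus:
  assumes "L_smooth L h gh"
  shows "L_smooth L (\<lambda>x. - h x) (\<lambda>x. - gh x)"
proof -
  have "((\<lambda>x. - h x) has_derivative (\<lambda>v. v \<bullet> - gh y)) (at y)" for y
    using has_derivative_minus[of h "\<lambda>v. v \<bullet> gh y" "at y"] assms
    unfolding L_smooth_def gderiv_def by simp
  moreover have "norm (- gh x - - gh y) = norm (gh x - gh y)" for x y
    by (simp add: norm_minus_commute)
  ultimately show ?thesis
    using assms unfolding L_smooth_def gderiv_def by simp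
qed

lemma L_smooth_lower_bound:
  fixes h :: "'a::real_inner \<Rightarrow> real"
  assumes "L_smooth L h gh"
  shows "h x + gh x \<bullet> u - L / 2 * (norm u)\<^sup>2 \<le> h (x + u)"
  using L_smooth_upper_bound[OF L_smooth_uminus[OF assms], of x u] by simp

lemma L_smooth_abs_le:
  fixes h :: "'a::real_inner \<Rightarrow> real"
  assumes "L_smooth L h gh"
  shows "\<bar>h (x + u) - h x - gh x \<bullet> u\<bar> \<le> L / 2 * (norm u)\<^sup>2"
  using L_smooth_upper_bound[OF assms, of x u] L_smooth_lower_bound[OF assms, of x u]
  by (intro abs_leI) linarith+

lemma L_smooth_continuous:
  assumes "L_smooth L h gh"
  shows "continuous_on UNIV h"
  using assms unfolding L_smooth_def gderiv_def
  by (auto intro!: continuous_at_imp_continuous_on has_derivative_continuous)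

lemma L_smooth_gradient_continuous:
  assumes "L_smooth L h gh" "0 \<le> L"
  shows "continuous_on UNIV gh"
  using assms unfolding L_smooth_def
  by (intro lipschitz_on_continuous_on[of L]) (auto simp: lipschitz_on_def dist_norm)

lemma one_minus_square_pos:
  fixes \<mu> :: real
  assumes "0 \<le> \<mu>" "\<mu> < 1"
  shows "0 < 1 - \<mu>\<^sup>2"
proof -
  have "\<mu>\<^sup>2 \<le> \<mu>" using assms by (simp add: power2_eq_square mult_left_le_one_le)
  then show ?thesis using assms by linarith
qed

lemma norm_add_squared_le_weighted:
  fixes a b :: "'a::real_inner"
  assumes "0 < c"
  shows "(norm (a + b))\<^sup>2 \<le> (1 + c) * (norm a)\<^sup>2 + (1 + 1 / c) * (norm b)\<^sup>2"
proof -
  have "2 * (a \<bullet> b) \<le> 2 * (norm a * norm b)"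
    using norm_cauchy_schwarz by simp
  also have "\<dots> \<le> c * (norm a)\<^sup>2 + (1 / c) * (norm b)\<^sup>2"
  proof -
    have "0 \<le> (c * norm a - norm b)\<^sup>2 / c" using assms by simp
    also have "\<dots> = c * (norm a)\<^sup>2 + (1 / c) * (norm b)\<^sup>2 - 2 * (norm a * norm b)"
      using assms by (simp add: power2_eq_square field_simps)
    finally show ?thesis by simp
  qed
  finally show ?thesis
    by (simp add: power2_norm_eq_inner inner_add_left inner_add_right inner_commute algebra_simps)
qed

lemma norm_add_squared_le:
  fixes a b :: "'a::real_inner"
  shows "(norm (a + b))\<^sup>2 \<le> 2 * (norm a)\<^sup>2 + 2 * (norm b)\<^sup>2"
  using norm_add_squared_le_weighted[of 1 a b] by simp

lemma norm_add4_squared_le: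
  fixes a b c d :: "'a::real_inner"
  shows "(norm (a + b + c + d))\<^sup>2 \<le> 4 * ((norm a)\<^sup>2 + (norm b)\<^sup>2 + (norm c)\<^sup>2 + (norm d)\<^sup>2)"
  using norm_add_squared_le[of "a + b" "c + d"] norm_add_squared_le[of a b] norm_add_squared_le[of c d]
  by (simp add: add.assoc)

lemma norm_scaleR_add_squared_le:
  fixes v x :: "'a::real_inner"
  assumes "0 \<le> \<mu>" "\<mu> < 1"
  shows "(norm (\<mu> *\<^sub>R v + x))\<^sup>2 \<le> (norm v)\<^sup>2 + (norm x)\<^sup>2 / (1 - \<mu>\<^sup>2)"
proof (cases "\<mu> = 0")
  case False
  then have "0 < \<mu>" using assms by simp
  have m2: "0 < 1 - \<mu>\<^sup>2" using one_minus_square_pos[OF assms] .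
  have "(norm (\<mu> *\<^sub>R v + x))\<^sup>2
      \<le> (1 + (1 / \<mu>\<^sup>2 - 1)) * (norm (\<mu> *\<^sub>R v))\<^sup>2 + (1 + 1 / (1 / \<mu>\<^sup>2 - 1)) * (norm x)\<^sup>2"
    using \<open>0 < \<mu>\<close> m2 by (intro norm_add_squared_le_weighted) (simp add: field_simps)
  also have "\<dots> = (norm v)\<^sup>2 + (norm x)\<^sup>2 / (1 - \<mu>\<^sup>2)"
    using \<open>0 < \<mu>\<close> m2 by (simp add: power_mult_distrib field_simps)
  finally show ?thesis .
qed simp

lemma norm_weighted_sum_squared_le:
  fixes x :: "'i \<Rightarrow> 'a::real_inner"
  assumes "finite I" "\<And>i. i \<in> I \<Longrightarrow> 0 \<le> w i"
  shows "(norm (\<Sum>i\<in>I. w i *\<^sub>R x i))\<^sup>2 \<le> (\<Sum>i\<in>I. w i) * (\<Sum>i\<in>I. w i * (norm (x i))\<^sup>2)"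
proof -
  have "norm (\<Sum>i\<in>I. w i *\<^sub>R x i) \<le> (\<Sum>i\<in>I. sqrt (w i) * (sqrt (w i) * norm (x i)))"
    using norm_sum[of "\<lambda>i. w i *\<^sub>R x i" I] assms
    by (simp add: abs_of_nonneg real_sqrt_mult_self mult.assoc[symmetric])
  then have "(norm (\<Sum>i\<in>I. w i *\<^sub>R x i))\<^sup>2 \<le> (\<Sum>i\<in>I. sqrt (w i) * (sqrt (w i) * norm (x i)))\<^sup>2"
    by (simp add: power_mono)
  also have "\<dots> \<le> (\<Sum>i\<in>I. (sqrt (w i))\<^sup>2) * (\<Sum>i\<in>I. (sqrt (w i) * norm (x i))\<^sup>2)"
    by (rule Cauchy_Schwarz_ineq_sum)
  also have "\<dots> = (\<Sum>i\<in>I. w i) * (\<Sum>i\<in>I. w i * (norm (x i))\<^sup>2)"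
    using assms by (simp add: power_mult_distrib)
  finally show ?thesis .
qed

section \<open>Unrolling the local momentum iteration\<close>

lemma local_iter_snd_eq:
  "snd (local_iter \<eta> \<mu> Pm g \<theta>0 n) = (\<Sum>k<n. \<mu> ^ (n - 1 - k) *\<^sub>R (Pm *v g k))"
proof (induction n)
  case (Suc n)
  have "\<mu> *\<^sub>R (\<Sum>k<n. \<mu> ^ (n - 1 - k) *\<^sub>R (Pm *v g k)) = (\<Sum>k<n. \<mu> ^ (Suc n - 1 - k) *\<^sub>R (Pm *v g k))"
    unfolding scaleR_sum_right
  proof (intro sum.cong refl)
    fix k assume "k \<in> {..<n}"
    then have "Suc n - 1 - k = Suc (n - 1 - k)" by auto
    then show "\<mu> *\<^sub>R \<mu> ^ (n - 1 - k) *\<^sub>R (Pm *v g k) = \<mu> ^ (Suc n - 1 - k) *\<^sub>R (Pm *v g k)"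
      by simp
  qed
  then show ?case using Suc by (simp add: Let_def)
qed simp

lemma local_iter_fst_eq:
  "fst (local_iter \<eta> \<mu> Pm g \<theta>0 n) = \<theta>0 - \<eta> *\<^sub>R (\<Sum>k<n. (\<Sum>j<n - k. \<mu> ^ j) *\<^sub>R (Pm *v g k))"
proof (induction n)
  case (Suc n)
  have "(\<Sum>j<n - k. \<mu> ^ j) + \<mu> ^ (n - k) = (\<Sum>j<Suc n - k. \<mu> ^ j)" if "k < n" for k
    using that by (simp add: Suc_diff_le)
  then have sums: "(\<Sum>k<n. (\<Sum>j<n - k. \<mu> ^ j) *\<^sub>R (Pm *v g k)) + (\<Sum>k<Suc n. \<mu> ^ (Suc n - 1 - k) *\<^sub>R (Pm *v g k))
      = (\<Sum>k<Suc n. (\<Sum>j<Suc n - k. \<mu> ^ j) *\<^sub>R (Pm *v g k))"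
    by (simp add: sum.distrib[symmetric] scaleR_add_left[symmetric])
  have "fst (local_iter \<eta> \<mu> Pm g \<theta>0 (Suc n))
      = fst (local_iter \<eta> \<mu> Pm g \<theta>0 n) - \<eta> *\<^sub>R snd (local_iter \<eta> \<mu> Pm g \<theta>0 (Suc n))"
    by (simp add: Let_def)
  also have "\<dots> = \<theta>0 - \<eta> *\<^sub>R ((\<Sum>k<n. (\<Sum>j<n - k. \<mu> ^ j) *\<^sub>R (Pm *v g k))
      + (\<Sum>k<Suc n. \<mu> ^ (Suc n - 1 - k) *\<^sub>R (Pm *v g k)))"
    unfolding Suc local_iter_snd_eq by (simp add: algebra_simps)
  finally show ?case unfolding sums .
qed simp

lemma norm_local_iter_snd_le:
  assumes "0 \<le> \<mu>" "\<mu> < 1" and contraction: "\<And>k. norm (Pm *v g k) \<le> norm (g k)"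
  shows "(norm (snd (local_iter \<eta> \<mu> Pm g \<theta>0 n)))\<^sup>2 \<le> (\<Sum>k<n. (norm (g k))\<^sup>2) / (1 - \<mu>\<^sup>2)"
proof (induction n)
  case (Suc n)
  have m2: "0 < 1 - \<mu>\<^sup>2" using one_minus_square_pos[OF assms(1,2)] .
  have "(norm (snd (local_iter \<eta> \<mu> Pm g \<theta>0 (Suc n))))\<^sup>2
      = (norm (\<mu> *\<^sub>R snd (local_iter \<eta> \<mu> Pm g \<theta>0 n) + Pm *v g n))\<^sup>2"
    by (simp add: Let_def)
  also have "\<dots> \<le> (norm (snd (local_iter \<eta> \<mu> Pm g \<theta>0 n)))\<^sup>2 + (norm (Pm *v g n))\<^sup>2 / (1 - \<mu>\<^sup>2)"
    by (rule norm_scaleR_add_squared_le[OF assms(1,2)])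
  also have "\<dots> \<le> (\<Sum>k<n. (norm (g k))\<^sup>2) / (1 - \<mu>\<^sup>2) + (norm (g n))\<^sup>2 / (1 - \<mu>\<^sup>2)"
    using Suc.IH contraction[of n] m2 by (intro add_mono divide_right_mono power_mono) auto
  finally show ?case by (simp add: add_divide_distrib)
qed simp

lemma norm_local_iter_fst_diff_le:
  assumes "0 \<le> \<mu>" "\<mu> < 1" and contraction: "\<And>k. norm (Pm *v g k) \<le> norm (g k)"
  shows "(norm (fst (local_iter \<eta> \<mu> Pm g \<theta>0 n) - \<theta>0))\<^sup>2
    \<le> \<eta>\<^sup>2 * (real n)\<^sup>2 * (\<Sum>k<n. (norm (g k))\<^sup>2) / (1 - \<mu>\<^sup>2)"
proof (induction n)
  case (Suc n)
  define Y where "Y = (\<Sum>k<Suc n. (norm (g k))\<^sup>2) / (1 - \<mu>\<^sup>2)"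
  define T where "T = fst (local_iter \<eta> \<mu> Pm g \<theta>0 n) - \<theta>0"
  define V where "V = snd (local_iter \<eta> \<mu> Pm g \<theta>0 (Suc n))"
  have step: "fst (local_iter \<eta> \<mu> Pm g \<theta>0 (Suc n)) - \<theta>0 = T + (- \<eta> *\<^sub>R V)"
    unfolding T_def V_def by (simp add: Let_def algebra_simps)
  have "(norm T)\<^sup>2 \<le> \<eta>\<^sup>2 * (real n)\<^sup>2 * ((\<Sum>k<n. (norm (g k))\<^sup>2) / (1 - \<mu>\<^sup>2))"
    using Suc.IH unfolding T_def by simp
  also have "\<dots> \<le> \<eta>\<^sup>2 * (real n)\<^sup>2 * Y"
    unfolding Y_def using one_minus_square_pos[OF assms(1,2)]
    by (intro mult_left_mono divide_right_mono) auto
  finally have T: "(norm T)\<^sup>2 \<le> \<eta>\<^sup>2 * (real n)\<^sup>2 * Y" .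
  have "(norm V)\<^sup>2 \<le> Y"
    unfolding V_def Y_def by (rule norm_local_iter_snd_le[OF assms])
  then have V: "(norm (- \<eta> *\<^sub>R V))\<^sup>2 \<le> \<eta>\<^sup>2 * Y"
    by (simp add: power_mult_distrib mult_left_mono)
  show ?case
  proof (cases "n = 0")
    case False
    then have n: "0 < real n" by simp
    have "(norm (T + (- \<eta> *\<^sub>R V)))\<^sup>2 \<le> (1 + 1 / real n) * (norm T)\<^sup>2 + (1 + 1 / (1 / real n)) * (norm (- \<eta> *\<^sub>R V))\<^sup>2"
      using n by (intro norm_add_squared_le_weighted) simp
    also have "\<dots> \<le> (1 + 1 / real n) * (\<eta>\<^sup>2 * (real n)\<^sup>2 * Y) + (1 + real n) * (\<eta>\<^sup>2 * Y)"
      using T V n by (intro add_mono mult_left_mono) auto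
    also have "\<dots> = \<eta>\<^sup>2 * (real (Suc n))\<^sup>2 * Y"
      using n by (simp add: field_simps power2_eq_square)
    finally show ?thesis unfolding step Y_def by simp
  qed (use V step T_def Y_def in simp)
qed simp

lemma alpha_w_eq_geometric_sum:
  assumes "\<mu> < 1"
  shows "alpha_w \<mu> \<tau> q = (\<Sum>j<\<tau> - q. \<mu> ^ j)"
  using assms by (simp add: alpha_w_def sum_gp_strict)

lemma alpha_w_nonneg:
  assumes "0 \<le> \<mu>" "\<mu> < 1"
  shows "0 \<le> alpha_w \<mu> \<tau> q"
  using assms by (simp add: alpha_w_eq_geometric_sum sum_nonneg)

lemma alpha_w_le:
  assumes "0 \<le> \<mu>" "\<mu> < 1"
  shows "alpha_w \<mu> \<tau> q \<le> 1 / (1 - \<mu>)"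
  using assms unfolding alpha_w_def by (simp add: divide_right_mono)

lemma alpha_w_ge_1:
  assumes "0 \<le> \<mu>" "\<mu> < 1" "q < \<tau>"
  shows "1 \<le> alpha_w \<mu> \<tau> q"
proof -
  have "(\<Sum>j\<in>{0}. \<mu> ^ j) \<le> (\<Sum>j<\<tau> - q. \<mu> ^ j)"
    using assms by (intro sum_mono2) auto
  then show ?thesis using assms by (simp add: alpha_w_eq_geometric_sum)
qed

lemma S_tau_pos:
  assumes "0 \<le> \<mu>" "\<mu> < 1" "1 \<le> \<tau>"
  shows "0 < S_tau \<mu> \<tau>"
proof -
  have "(\<Sum>q<\<tau>. 1) \<le> S_tau \<mu> \<tau>"
    unfolding S_tau_def using alpha_w_ge_1[OF assms(1,2)] by (intro sum_mono) auto
  then show ?thesis using assms by simp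
qed

lemma S_tau_le:
  assumes "0 \<le> \<mu>" "\<mu> < 1"
  shows "S_tau \<mu> \<tau> \<le> real \<tau> / (1 - \<mu>)"
proof -
  have "S_tau \<mu> \<tau> \<le> (\<Sum>q<\<tau>. 1 / (1 - \<mu>))"
    unfolding S_tau_def using alpha_w_le[OF assms] by (intro sum_mono) auto
  then show ?thesis by simp
qed

lemma local_iter_fst_alpha_w:
  assumes "\<mu> < 1"
  shows "fst (local_iter \<eta> \<mu> Pm g \<theta>0 \<tau>) = \<theta>0 - \<eta> *\<^sub>R (\<Sum>k<\<tau>. alpha_w \<mu> \<tau> k *\<^sub>R (Pm *v g k))"
  unfolding local_iter_fst_eq alpha_w_eq_geometric_sum[OF assms] ..

lemma borel_measurable_matrix_vector_mult[measurable (raw)]: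
  fixes A :: "'a \<Rightarrow> real^'n^'m" and x :: "'a \<Rightarrow> real^'n"
  assumes "A \<in> borel_measurable F" "x \<in> borel_measurable F"
  shows "(\<lambda>\<omega>. A \<omega> *v x \<omega>) \<in> borel_measurable F"
proof -
  have "continuous_on UNIV (\<lambda>p::(real^'n^'m) \<times> (real^'n). fst p *v snd p)"
    unfolding matrix_vector_mult_def by (intro continuous_intros)
  from borel_measurable_continuous_on[OF this borel_measurable_Pair[OF assms]] show ?thesis
    by simp
qed

lemma borel_measurable_local_iter:
  fixes Pm :: "'a \<Rightarrow> real^'d^'d" and g :: "nat \<Rightarrow> 'a \<Rightarrow> real^'d"
  assumes "Pm \<in> borel_measurable F" "\<forall>k<n. g k \<in> borel_measurable F"
  shows "(\<lambda>\<omega>. fst (local_iter \<eta> \<mu> (Pm \<omega>) (\<lambda>s. g s \<omega>) \<theta>0 n)) \<in> borel_measurable F \<and>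
    (\<lambda>\<omega>. snd (local_iter \<eta> \<mu> (Pm \<omega>) (\<lambda>s. g s \<omega>) \<theta>0 n)) \<in> borel_measurable F"
  using assms(2)
proof (induction n)
  case (Suc n)
  then have fst: "(\<lambda>\<omega>. fst (local_iter \<eta> \<mu> (Pm \<omega>) (\<lambda>s. g s \<omega>) \<theta>0 n)) \<in> borel_measurable F"
    and snd: "(\<lambda>\<omega>. snd (local_iter \<eta> \<mu> (Pm \<omega>) (\<lambda>s. g s \<omega>) \<theta>0 n)) \<in> borel_measurable F"
    by auto
  have "(\<lambda>\<omega>. \<mu> *\<^sub>R snd (local_iter \<eta> \<mu> (Pm \<omega>) (\<lambda>s. g s \<omega>) \<theta>0 n) + Pm \<omega> *v g n \<omega>) \<in> borel_measurable F"
    using snd Suc.prems assms(1)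
    by (intro borel_measurable_add borel_measurable_scaleR borel_measurable_matrix_vector_mult) auto
  then show ?case
    using fst by (auto simp: Let_def intro!: borel_measurable_diff borel_measurable_scaleR)
qed simp

section \<open>Orthogonal projections and the Haar measure on the Stiefel manifold\<close>

definition orthogonal_projection_matrix :: "real^'n^'n \<Rightarrow> bool" where
  "orthogonal_projection_matrix A \<longleftrightarrow> transpose A = A \<and> A ** A = A"

lemma stiefel_orthogonal_projection_matrix:
  fixes Q :: "real^'r^'d"
  assumes "Q \<in> stiefel"
  shows "orthogonal_projection_matrix (Q ** transpose Q)"
proof -
  have "transpose Q ** Q = mat 1" using assms unfolding stiefel_def by simp
  then have "Q ** transpose Q ** (Q ** transpose Q) = Q ** transpose Q"
    by (simp add: matrix_mul_assoc) (simp add: matrix_mul_assoc[symmetric])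
  then show ?thesis
    unfolding orthogonal_projection_matrix_def by (simp add: matrix_transpose_mul)
qed

context
  fixes A :: "real^'n^'n"
  assumes A: "orthogonal_projection_matrix A"
begin

lemma orthogonal_projection_inner_commute: "(A *v x) \<bullet> y = x \<bullet> (A *v y)"
  using A unfolding orthogonal_projection_matrix_def
  by (metis dot_lmul_matrix inner_commute transpose_matrix_vector)

lemma orthogonal_projection_inner_both: "(A *v x) \<bullet> (A *v y) = x \<bullet> (A *v y)"
  using A orthogonal_projection_inner_commute[of x "A *v y"]
  unfolding orthogonal_projection_matrix_def by (simp add: matrix_vector_mul_assoc)

lemma orthogonal_projection_norm_le: "norm (A *v x) \<le> norm x"
proof -
  have "(norm (A *v x))\<^sup>2 = x \<bullet> (A *v x)"
    using orthogonal_projection_inner_both[of x x] by (simp add: power2_norm_eq_inner)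
  also have "\<dots> \<le> norm x * norm (A *v x)" by (rule norm_cauchy_schwarz)
  finally show ?thesis
    by (cases "A *v x = 0") (auto simp: power2_eq_square)
qed

end

text \<open>The gap between the two sides is the sum of squares
  \<open>\<eta> S (1 - L \<eta> S) / 2 * (\<parallel>a\<parallel>\<^sup>2 + \<parallel>a - p\<parallel>\<^sup>2) + L \<eta>\<^sup>2 / 2 * \<parallel>c - S (a - p)\<parallel>\<^sup>2\<close>.\<close>
lemma momentum_step_inner_le:
  fixes p a c :: "'a::real_inner"
  assumes "0 \<le> \<eta>" "0 \<le> S" "0 \<le> L" "L * \<eta> * S \<le> 1"
  shows "- \<eta> * S * (p \<bullet> a) - \<eta> * (p \<bullet> c) + L * \<eta>\<^sup>2 / 2 * (norm (S *\<^sub>R a + c))\<^sup>2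
    \<le> - (\<eta> * S / 2) * (norm p)\<^sup>2 + \<eta> * S * (norm (a - p))\<^sup>2
       + (L * \<eta>\<^sup>2 * S - \<eta>) * (p \<bullet> c) + L * \<eta>\<^sup>2 * (norm c)\<^sup>2"
proof -
  have sq: "(norm x)\<^sup>2 = x \<bullet> x" for x :: 'a
    by (rule power2_norm_eq_inner)
  have e1: "(norm (S *\<^sub>R a + c))\<^sup>2 = S\<^sup>2 * (a \<bullet> a) + 2 * S * (a \<bullet> c) + c \<bullet> c"
    unfolding sq by (simp add: inner_add_left inner_add_right inner_commute power2_eq_square)
  have e2: "(norm (a - p))\<^sup>2 = a \<bullet> a - 2 * (a \<bullet> p) + p \<bullet> p"
    unfolding sq by (simp add: inner_diff_left inner_diff_right inner_commute)
  have e3: "(norm (c - S *\<^sub>R (a - p)))\<^sup>2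
      = c \<bullet> c - 2 * S * (a \<bullet> c) + 2 * S * (p \<bullet> c) + S\<^sup>2 * (a \<bullet> a - 2 * (a \<bullet> p) + p \<bullet> p)"
    unfolding sq
    by (simp add: inner_diff_left inner_diff_right inner_commute power2_eq_square algebra_simps)
  have gap: "- (\<eta> * S / 2) * (norm p)\<^sup>2 + \<eta> * S * (norm (a - p))\<^sup>2
       + (L * \<eta>\<^sup>2 * S - \<eta>) * (p \<bullet> c) + L * \<eta>\<^sup>2 * (norm c)\<^sup>2
     - (- \<eta> * S * (p \<bullet> a) - \<eta> * (p \<bullet> c) + L * \<eta>\<^sup>2 / 2 * (norm (S *\<^sub>R a + c))\<^sup>2)
    = \<eta> * S * (1 - L * \<eta> * S) / 2 * ((norm a)\<^sup>2 + (norm (a - p))\<^sup>2)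
      + L * \<eta>\<^sup>2 / 2 * (norm (c - S *\<^sub>R (a - p)))\<^sup>2"
    unfolding e1 e2 e3 inner_commute[of p a] sq[of a] sq[of p] sq[of c]
    by (simp add: power2_eq_square field_simps)
  have "0 \<le> \<eta> * S * (1 - L * \<eta> * S) / 2 * ((norm a)\<^sup>2 + (norm (a - p))\<^sup>2)"
    using assms by simp
  moreover have "0 \<le> L * \<eta>\<^sup>2 / 2 * (norm (c - S *\<^sub>R (a - p)))\<^sup>2"
    using assms by simp
  ultimately show ?thesis using gap by linarith
qed

lemma orthogonal_projection_step_le:
  fixes A :: "real^'n^'n" and G a b :: "real^'n"
  assumes A: "orthogonal_projection_matrix A"
    and "0 \<le> \<eta>" "0 \<le> S" "0 \<le> L" "L * \<eta> * S \<le> 1"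
  shows "G \<bullet> (- \<eta> *\<^sub>R (A *v (S *\<^sub>R a + b))) + L / 2 * (norm (- \<eta> *\<^sub>R (A *v (S *\<^sub>R a + b))))\<^sup>2
    \<le> - (\<eta> * S / 2) * (G \<bullet> (A *v G)) + \<eta> * S * (norm (a - G))\<^sup>2
       + (L * \<eta>\<^sup>2 * S - \<eta>) * ((A *v G) \<bullet> b) + L * \<eta>\<^sup>2 * (norm b)\<^sup>2"
proof -
  note inner_both = orthogonal_projection_inner_both[OF A]
  have Ab: "(A *v G) \<bullet> (A *v b) = (A *v G) \<bullet> b"
    using orthogonal_projection_inner_commute[OF A, of G b] inner_both[of G b] by linarith
  have Av: "A *v (S *\<^sub>R a + b) = S *\<^sub>R (A *v a) + A *v b"
    by (simp add: matrix_vector_right_distrib matrix_vector_mult_scaleR)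
  have "G \<bullet> (- \<eta> *\<^sub>R (A *v (S *\<^sub>R a + b))) + L / 2 * (norm (- \<eta> *\<^sub>R (A *v (S *\<^sub>R a + b))))\<^sup>2
    = - \<eta> * S * ((A *v G) \<bullet> (A *v a)) - \<eta> * ((A *v G) \<bullet> (A *v b))
      + L * \<eta>\<^sup>2 / 2 * (norm (S *\<^sub>R (A *v a) + A *v b))\<^sup>2"
    unfolding Av norm_scaleR power_mult_distrib
    by (simp add: inner_both inner_add_right right_diff_distrib distrib_left)
  also have "\<dots> \<le> - (\<eta> * S / 2) * (norm (A *v G))\<^sup>2 + \<eta> * S * (norm (A *v a - A *v G))\<^sup>2
       + (L * \<eta>\<^sup>2 * S - \<eta>) * ((A *v G) \<bullet> (A *v b)) + L * \<eta>\<^sup>2 * (norm (A *v b))\<^sup>2"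
    by (rule momentum_step_inner_le[OF assms(2-)])
  also have "\<dots> \<le> - (\<eta> * S / 2) * (G \<bullet> (A *v G)) + \<eta> * S * (norm (a - G))\<^sup>2
       + (L * \<eta>\<^sup>2 * S - \<eta>) * ((A *v G) \<bullet> b) + L * \<eta>\<^sup>2 * (norm b)\<^sup>2"
  proof -
    have "(norm (A *v a - A *v G))\<^sup>2 \<le> (norm (a - G))\<^sup>2"
      using orthogonal_projection_norm_le[OF A, of "a - G"]
      by (simp add: matrix_vector_mult_diff_distrib power_mono)
    then have "\<eta> * S * (norm (A *v a - A *v G))\<^sup>2 \<le> \<eta> * S * (norm (a - G))\<^sup>2"
      using assms(2,3) by (intro mult_left_mono) auto
    moreover have "(norm (A *v b))\<^sup>2 \<le> (norm b)\<^sup>2"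
      using orthogonal_projection_norm_le[OF A, of b] by (simp add: power_mono)
    then have "L * \<eta>\<^sup>2 * (norm (A *v b))\<^sup>2 \<le> L * \<eta>\<^sup>2 * (norm b)\<^sup>2"
      using assms(4) by (intro mult_left_mono) auto
    moreover have nG: "G \<bullet> (A *v G) = (norm (A *v G))\<^sup>2"
      by (simp add: power2_norm_eq_inner inner_both)
    ultimately show ?thesis unfolding Ab nG by linarith
  qed
  finally show ?thesis .
qed

lemma orthogonal_projection_entry_abs_le:
  fixes A :: "real^'n^'n"
  assumes "orthogonal_projection_matrix A"
  shows "\<bar>A $ k $ l\<bar> \<le> 1"
proof -
  have "A $ k $ l = (A *v axis l 1) $ k"
    by (simp add: matrix_vector_mult_basis column_def)
  also have "\<bar>\<dots>\<bar> \<le> norm (A *v axis l 1)"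
    by (rule component_le_norm_cart)
  also have "\<dots> \<le> 1"
    using orthogonal_projection_norm_le[OF assms, of "axis l 1"] by simp
  finally show ?thesis .
qed

lemma matrix_mul_transpose_self_nth:
  fixes P :: "real^'r^'d"
  shows "(P ** transpose P) $ k $ l = (\<Sum>m\<in>UNIV. P $ k $ m * P $ l $ m)"
  by (simp add: matrix_matrix_mult_def transpose_def)

lemma stiefel_trace_projection:
  fixes P :: "real^'r^'d"
  assumes "P \<in> stiefel"
  shows "(\<Sum>k\<in>UNIV. (P ** transpose P) $ k $ k) = real CARD('r)"
proof -
  have "(\<Sum>k\<in>UNIV. P $ k $ m * P $ k $ m) = 1" for m
    using arg_cong[where f="\<lambda>B. B $ m $ m", OF assms[unfolded stiefel_def, simplified]]
    by (simp add: matrix_matrix_mult_def transpose_def mat_def)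
  then show ?thesis
    unfolding matrix_mul_transpose_self_nth by (subst sum.swap) simp
qed

lemma quadratic_form_eq_sum_entries:
  fixes A :: "real^'n^'n"
  shows "x \<bullet> (A *v x) = (\<Sum>k\<in>UNIV. \<Sum>l\<in>UNIV. x $ k * x $ l * A $ k $ l)"
  by (simp add: inner_vec_def matrix_vector_mult_def sum_distrib_left mult.commute mult.left_commute)

definition reflection_matrix :: "'n::finite \<Rightarrow> real^'n^'n" where
  "reflection_matrix k = (\<chi> a b. if a = b then (if a = k then -1 else 1) else 0)"

definition transposition_matrix :: "'n::finite \<Rightarrow> 'n \<Rightarrow> real^'n^'n" where
  "transposition_matrix k l = (\<chi> a b. if b = Transposition.transpose k l a then 1 else 0)"

lemma reflection_matrix_mult_nth:
  "(reflection_matrix k ** P) $ a $ m = (if a = k then -1 else 1) * P $ a $ m"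
  unfolding reflection_matrix_def matrix_matrix_mult_def
  by (simp add: if_distrib[of "\<lambda>x. x * _"] cong: if_cong)

lemma transposition_matrix_mult_nth:
  "(transposition_matrix k l ** P) $ a $ m = P $ (Transposition.transpose k l a) $ m"
  unfolding transposition_matrix_def matrix_matrix_mult_def
  by (simp add: if_distrib[of "\<lambda>x. x * _"] cong: if_cong)

lemma orthogonal_matrix_reflection_matrix: "orthogonal_matrix (reflection_matrix k)"
proof -
  have "transpose (reflection_matrix k) = reflection_matrix k"
    unfolding reflection_matrix_def transpose_def by (simp add: vec_eq_iff)
  moreover have "reflection_matrix k ** reflection_matrix k = mat 1"
    by (simp add: vec_eq_iff reflection_matrix_mult_nth mat_def) (simp add: reflection_matrix_def)
  ultimately show ?thesis unfolding orthogonal_matrix by simp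
qed

lemma orthogonal_matrix_transposition_matrix: "orthogonal_matrix (transposition_matrix k l)"
proof -
  have "transpose (transposition_matrix k l) = transposition_matrix k l"
    unfolding transposition_matrix_def transpose_def by (auto simp: vec_eq_iff transpose_eq_iff)
  moreover have "transposition_matrix k l ** transposition_matrix k l = mat 1"
    by (simp add: vec_eq_iff transposition_matrix_mult_nth mat_def) (simp add: transposition_matrix_def)
  ultimately show ?thesis unfolding orthogonal_matrix by simp
qed

lemma borel_measurable_projection_entry:
  "(\<lambda>P::real^'r^'d. (P ** transpose P) $ k $ l) \<in> borel_measurable borel"
  unfolding matrix_mul_transpose_self_nth
  by (intro borel_measurable_continuous_onI continuous_intros)

context
  fixes Q :: "(real^'r^'d) measure"
  assumes Q: "haar_stiefel Q"
begin

lemma haar_stiefel_prob_space: "prob_space Q"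
  using Q unfolding haar_stiefel_def by simp

lemma haar_stiefel_measurable:
  "f \<in> borel_measurable borel \<Longrightarrow> f \<in> borel_measurable Q"
  using Q unfolding haar_stiefel_def by (simp cong: measurable_cong_sets)

lemma haar_stiefel_AE_stiefel: "AE P in Q. P \<in> stiefel"
  using Q prob_space.AE_prob_1[OF haar_stiefel_prob_space]
  unfolding haar_stiefel_def by (simp add: measure_def)

lemma haar_stiefel_integral_invariant:
  fixes h :: "real^'r^'d \<Rightarrow> real"
  assumes U: "orthogonal_matrix U" and h: "h \<in> borel_measurable borel"
  shows "(\<integral>P. h P \<partial>Q) = (\<integral>P. h (U ** P) \<partial>Q)"
proof -
  have "continuous_on UNIV (\<lambda>P::real^'r^'d. U ** P)"
    unfolding matrix_matrix_mult_def by (intro continuous_intros)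
  then have "(\<lambda>P. U ** P) \<in> Q \<rightarrow>\<^sub>M borel"
    by (intro haar_stiefel_measurable borel_measurable_continuous_onI)
  from integral_distr[OF this h] show ?thesis
    using Q U unfolding haar_stiefel_def by simp
qed

lemma haar_stiefel_integrable_projection_entry:
  "integrable Q (\<lambda>P. (P ** transpose P) $ k $ l)"
proof -
  have "AE P in Q. norm ((P ** transpose P) $ k $ l) \<le> 1"
    using haar_stiefel_AE_stiefel
    by eventually_elim
      (simp add: orthogonal_projection_entry_abs_le stiefel_orthogonal_projection_matrix)
  then show ?thesis
    using haar_stiefel_prob_space
    by (intro finite_measure.integrable_const_bound[where B=1]
        haar_stiefel_measurable borel_measurable_projection_entry)
      (auto simp: prob_space_def)
qed

text \<open>Reflecting the \<open>k\<close>-th coordinate flips the sign of the off-diagonal entries in row \<open>k\<close>;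
  swapping coordinates \<open>k\<close> and \<open>l\<close> exchanges the diagonal entries \<open>k\<close> and \<open>l\<close>, so all
  diagonal entries have the same mean, and their sum is the trace \<open>r\<close>.\<close>
lemma haar_stiefel_integral_projection_entry:
  "(\<integral>P. (P ** transpose P) $ k $ l \<partial>Q) = (if k = l then real CARD('r) / real CARD('d) else 0)"
proof (cases "k = l")
  case False
  have "(\<integral>P. (P ** transpose P) $ k $ l \<partial>Q)
      = (\<integral>P. (reflection_matrix k ** P ** transpose (reflection_matrix k ** P)) $ k $ l \<partial>Q)"
    by (rule haar_stiefel_integral_invariant
        [OF orthogonal_matrix_reflection_matrix borel_measurable_projection_entry])
  also have "\<dots> = (\<integral>P. - (P ** transpose P) $ k $ l \<partial>Q)"
    using False by (simp add: matrix_mul_transpose_self_nth reflection_matrix_mult_nth sum_negf)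
  finally show ?thesis using False by simp
next
  case True
  have diag: "(\<lambda>j. \<integral>P. (P ** transpose P) $ j $ j \<partial>Q) = (\<lambda>_. \<integral>P. (P ** transpose P) $ k $ k \<partial>Q)"
  proof
    fix j
    have "(\<integral>P. (P ** transpose P) $ j $ j \<partial>Q)
        = (\<integral>P. (transposition_matrix j k ** P ** transpose (transposition_matrix j k ** P)) $ j $ j \<partial>Q)"
      by (rule haar_stiefel_integral_invariant
          [OF orthogonal_matrix_transposition_matrix borel_measurable_projection_entry])
    then show "(\<integral>P. (P ** transpose P) $ j $ j \<partial>Q) = (\<integral>P. (P ** transpose P) $ k $ k \<partial>Q)"
      by (simp add: matrix_mul_transpose_self_nth transposition_matrix_mult_nth)
  qed
  have "real CARD('d) * (\<integral>P. (P ** transpose P) $ k $ k \<partial>Q)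
      = (\<Sum>j\<in>UNIV. (\<integral>P. (P ** transpose P) $ j $ j \<partial>Q))"
    unfolding diag by simp
  also have "\<dots> = (\<integral>P. (\<Sum>j\<in>UNIV. (P ** transpose P) $ j $ j) \<partial>Q)"
    by (rule Bochner_Integration.integral_sum[symmetric]) (rule haar_stiefel_integrable_projection_entry)
  also have "\<dots> = (\<integral>P. real CARD('r) \<partial>Q)"
    using haar_stiefel_AE_stiefel
    by (intro integral_cong_AE haar_stiefel_measurable borel_measurable_sum
        borel_measurable_projection_entry) (auto simp: stiefel_trace_projection)
  also have "\<dots> = real CARD('r)"
    using prob_space.prob_space[OF haar_stiefel_prob_space] by simp
  finally show ?thesis using True by (simp add: field_simps)
qed

lemma haar_stiefel_integral_projection_quadratic_form:
  shows "integrable Q (\<lambda>P. x \<bullet> ((P ** transpose P) *v x))"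
    and "(\<integral>P. x \<bullet> ((P ** transpose P) *v x) \<partial>Q) = real CARD('r) / real CARD('d) * (norm x)\<^sup>2"
proof -
  show "integrable Q (\<lambda>P. x \<bullet> ((P ** transpose P) *v x))"
    unfolding quadratic_form_eq_sum_entries
    by (intro Bochner_Integration.integrable_sum integrable_mult_right
        haar_stiefel_integrable_projection_entry)
  have "(\<integral>P. x \<bullet> ((P ** transpose P) *v x) \<partial>Q)
      = (\<Sum>k\<in>UNIV. \<Sum>l\<in>UNIV. x $ k * x $ l * (\<integral>P. (P ** transpose P) $ k $ l \<partial>Q))"
    unfolding quadratic_form_eq_sum_entries
    by (simp add: Bochner_Integration.integral_sum integrable_mult_right
        haar_stiefel_integrable_projection_entry)
  also have "\<dots> = (\<Sum>k\<in>UNIV. real CARD('r) / real CARD('d) * (x $ k * x $ k))"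
    by (simp add: haar_stiefel_integral_projection_entry if_distrib[of "\<lambda>y. _ * y"] ac_simps
        cong: if_cong)
  also have "\<dots> = real CARD('r) / real CARD('d) * (norm x)\<^sup>2"
    by (simp add: power2_norm_eq_inner inner_vec_def sum_distrib_left)
  finally show "(\<integral>P. x \<bullet> ((P ** transpose P) *v x) \<partial>Q) = real CARD('r) / real CARD('d) * (norm x)\<^sup>2" .
qed

end

section \<open>Square-integrable random vectors\<close>

definition square_integrable :: "'a measure \<Rightarrow> ('a \<Rightarrow> 'b::real_normed_vector) \<Rightarrow> bool" where
  "square_integrable M X \<longleftrightarrow> X \<in> borel_measurable M \<and> integrable M (\<lambda>\<omega>. (norm (X \<omega>))\<^sup>2)"

lemma square_integrable_dominated:
  fixes X :: "'a \<Rightarrow> 'b::real_normed_vector" and Y :: "'a \<Rightarrow> 'c::real_normed_vector"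
  assumes "finite_measure M" "square_integrable M X" "Y \<in> borel_measurable M"
    and "AE \<omega> in M. norm (Y \<omega>) \<le> c + b * norm (X \<omega>)"
  shows "square_integrable M Y"
proof -
  have "integrable M (\<lambda>\<omega>. 2 * c\<^sup>2 + 2 * b\<^sup>2 * (norm (X \<omega>))\<^sup>2)"
    using assms(1,2) unfolding square_integrable_def
    by (intro Bochner_Integration.integrable_add integrable_mult_right finite_measure.integrable_const) auto
  moreover have "(\<lambda>\<omega>. (norm (Y \<omega>))\<^sup>2) \<in> borel_measurable M"
    using assms(3) by measurable
  moreover have "AE \<omega> in M. norm ((norm (Y \<omega>))\<^sup>2) \<le> norm (2 * c\<^sup>2 + 2 * b\<^sup>2 * (norm (X \<omega>))\<^sup>2)"
    using assms(4)
  proof eventually_elim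
    case (elim \<omega>)
    have "(norm (Y \<omega>))\<^sup>2 \<le> (c + b * norm (X \<omega>))\<^sup>2"
      using elim norm_ge_zero by (intro power_mono) auto
    also have "\<dots> \<le> 2 * c\<^sup>2 + 2 * b\<^sup>2 * (norm (X \<omega>))\<^sup>2"
      using sum_squares_bound[of c "b * norm (X \<omega>)"]
      by (simp add: power_mult_distrib algebra_simps power2_eq_square)
    finally show ?case by simp
  qed
  ultimately show ?thesis
    using assms(3) Bochner_Integration.integrable_bound unfolding square_integrable_def by blast
qed

lemma square_integrable_add:
  fixes X Y :: "'a \<Rightarrow> 'b::euclidean_space"
  assumes "square_integrable M X" "square_integrable M Y"
  shows "square_integrable M (\<lambda>\<omega>. X \<omega> + Y \<omega>)"
proof -
  have m: "(\<lambda>\<omega>. X \<omega> + Y \<omega>) \<in> borel_measurable M"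
    using assms unfolding square_integrable_def by auto
  have "integrable M (\<lambda>\<omega>. 2 * (norm (X \<omega>))\<^sup>2 + 2 * (norm (Y \<omega>))\<^sup>2)"
    using assms unfolding square_integrable_def
    by (intro Bochner_Integration.integrable_add integrable_mult_right) auto
  moreover have "(\<lambda>\<omega>. (norm (X \<omega> + Y \<omega>))\<^sup>2) \<in> borel_measurable M"
    using m by measurable
  moreover have "AE \<omega> in M. norm ((norm (X \<omega> + Y \<omega>))\<^sup>2) \<le> norm (2 * (norm (X \<omega>))\<^sup>2 + 2 * (norm (Y \<omega>))\<^sup>2)"
    using norm_add_squared_le by (intro AE_I2) simp
  ultimately show ?thesis
    using m Bochner_Integration.integrable_bound unfolding square_integrable_def by blast
qed

lemma square_integrable_scaleR:
  fixes X :: "'a \<Rightarrow> 'b::euclidean_space"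
  assumes "square_integrable M X"
  shows "square_integrable M (\<lambda>\<omega>. c *\<^sub>R X \<omega>)"
  using assms unfolding square_integrable_def
  by (auto simp: power_mult_distrib intro: borel_measurable_scaleR)

lemma square_integrable_diff:
  fixes X Y :: "'a \<Rightarrow> 'b::euclidean_space"
  assumes "square_integrable M X" "square_integrable M Y"
  shows "square_integrable M (\<lambda>\<omega>. X \<omega> - Y \<omega>)"
  using square_integrable_add[OF assms(1) square_integrable_scaleR[OF assms(2), of "-1"]] by simp

lemma square_integrable_const:
  "finite_measure M \<Longrightarrow> square_integrable M (\<lambda>\<omega>. v)"
  unfolding square_integrable_def by (simp add: finite_measure.integrable_const)

lemma square_integrable_sum:
  fixes X :: "'i \<Rightarrow> 'a \<Rightarrow> 'b::euclidean_space"
  assumes "\<And>i. i \<in> I \<Longrightarrow> square_integrable M (X i)"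
  shows "square_integrable M (\<lambda>\<omega>. \<Sum>i\<in>I. X i \<omega>)"
  using assms
proof (induction I rule: infinite_finite_induct)
  case (insert i I)
  then show ?case using square_integrable_add[of M "X i" "\<lambda>\<omega>. \<Sum>i\<in>I. X i \<omega>"] by simp
qed (simp_all add: square_integrable_def)

lemma square_integrable_integrable:
  fixes X :: "'a \<Rightarrow> 'b::euclidean_space"
  assumes "finite_measure M" "square_integrable M X"
  shows "integrable M X"
proof -
  have "integrable M (\<lambda>\<omega>. 1 + (norm (X \<omega>))\<^sup>2)"
    using assms unfolding square_integrable_def
    by (intro Bochner_Integration.integrable_add finite_measure.integrable_const) auto
  moreover have "norm (X \<omega>) \<le> norm (1 + (norm (X \<omega>))\<^sup>2)" for \<omega>
  proof -
    have "2 * norm (X \<omega>) \<le> 1 + (norm (X \<omega>))\<^sup>2"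
      using sum_squares_bound[of 1 "norm (X \<omega>)"] by simp
    then have "norm (X \<omega>) \<le> 1 + (norm (X \<omega>))\<^sup>2"
      using norm_ge_zero[of "X \<omega>"] by linarith
    then show ?thesis by simp
  qed
  then have "AE \<omega> in M. norm (X \<omega>) \<le> norm (1 + (norm (X \<omega>))\<^sup>2)"
    by simp
  ultimately show ?thesis
    using assms(2) Bochner_Integration.integrable_bound unfolding square_integrable_def by blast
qed

lemma integrable_inner_square_integrable:
  fixes X Y :: "'a \<Rightarrow> 'b::euclidean_space"
  assumes "square_integrable M X" "square_integrable M Y"
  shows "integrable M (\<lambda>\<omega>. X \<omega> \<bullet> Y \<omega>)"
proof -
  have "integrable M (\<lambda>\<omega>. (norm (X \<omega>))\<^sup>2 + (norm (Y \<omega>))\<^sup>2)"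
    using assms unfolding square_integrable_def by (intro Bochner_Integration.integrable_add) auto
  moreover have "norm (X \<omega> \<bullet> Y \<omega>) \<le> norm ((norm (X \<omega>))\<^sup>2 + (norm (Y \<omega>))\<^sup>2)" for \<omega>
  proof -
    have "\<bar>X \<omega> \<bullet> Y \<omega>\<bar> \<le> norm (X \<omega>) * norm (Y \<omega>)" by (rule Cauchy_Schwarz_ineq2)
    also have "\<dots> \<le> (norm (X \<omega>))\<^sup>2 + (norm (Y \<omega>))\<^sup>2"
      using sum_squares_bound[of "norm (X \<omega>)" "norm (Y \<omega>)"]
        mult_nonneg_nonneg[OF norm_ge_zero[of "X \<omega>"] norm_ge_zero[of "Y \<omega>"]] by linarith
    finally show ?thesis by simp
  qed
  then have "AE \<omega> in M. norm (X \<omega> \<bullet> Y \<omega>) \<le> norm ((norm (X \<omega>))\<^sup>2 + (norm (Y \<omega>))\<^sup>2)"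
    by simp
  moreover have "(\<lambda>\<omega>. X \<omega> \<bullet> Y \<omega>) \<in> borel_measurable M"
    using assms unfolding square_integrable_def by (intro borel_measurable_inner) auto
  ultimately show ?thesis
    using Bochner_Integration.integrable_bound by blast
qed

lemma borel_measurable_vec_nth:
  fixes X :: "'a \<Rightarrow> real^'n"
  shows "X \<in> borel_measurable F \<Longrightarrow> (\<lambda>\<omega>. X \<omega> $ c) \<in> borel_measurable F"
  using borel_measurable_continuous_on[OF linear_continuous_on[OF bounded_linear_vec_nth]] .

lemma square_integrable_vec_nth:
  fixes X :: "'a \<Rightarrow> real^'n"
  assumes "square_integrable M X"
  shows "square_integrable M (\<lambda>\<omega>. X \<omega> $ c)"
proof -
  have "(\<lambda>\<omega>. X \<omega> $ c) \<in> borel_measurable M"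
    using assms unfolding square_integrable_def by (simp add: borel_measurable_vec_nth)
  moreover have "norm ((norm (X \<omega> $ c))\<^sup>2) \<le> norm ((norm (X \<omega>))\<^sup>2)" for \<omega>
    using power_mono[OF component_le_norm_cart[of "X \<omega>" c] abs_ge_zero, of 2] by simp
  then have "AE \<omega> in M. norm ((norm (X \<omega> $ c))\<^sup>2) \<le> norm ((norm (X \<omega>))\<^sup>2)"
    by simp
  moreover have "(\<lambda>\<omega>. (norm (X \<omega> $ c))\<^sup>2) \<in> borel_measurable M"
    using calculation(1) by measurable
  ultimately show ?thesis
    using assms Bochner_Integration.integrable_bound unfolding square_integrable_def by blast
qed

text \<open>Componentwise, the hypothesis says that the conditional expectation of \<open>\<xi>\<close> given \<open>F\<close>
  vanishes, and \<open>X\<close> can be pulled into it.\<close>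
lemma integral_inner_eq_0_if_set_integrals_eq_0:
  fixes X \<xi> :: "'a \<Rightarrow> real^'n"
  assumes M: "finite_measure M" and F: "subalgebra M F"
    and X: "X \<in> borel_measurable F" "square_integrable M X" and \<xi>: "square_integrable M \<xi>"
    and zero: "\<And>A. A \<in> sets F \<Longrightarrow> (\<integral>\<omega>. indicator A \<omega> *\<^sub>R \<xi> \<omega> \<partial>M) = 0"
  shows "(\<integral>\<omega>. X \<omega> \<bullet> \<xi> \<omega> \<partial>M) = 0"
proof -
  interpret finite_measure_subalgebra M F
    by (rule finite_measure_subalgebra.intro[OF M finite_measure_subalgebra_axioms.intro[OF F]])
  have int_X\<xi>: "integrable M (\<lambda>\<omega>. X \<omega> $ c * \<xi> \<omega> $ c)" for c
    using integrable_inner_square_integrable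
      [OF square_integrable_vec_nth[OF X(2)] square_integrable_vec_nth[OF \<xi>]] by simp
  have component: "(\<integral>\<omega>. X \<omega> $ c * \<xi> \<omega> $ c \<partial>M) = 0" for c
  proof -
    have int_\<xi>: "integrable M (\<lambda>\<omega>. \<xi> \<omega> $ c)"
      using square_integrable_integrable[OF M square_integrable_vec_nth[OF \<xi>]] .
    have "AE \<omega> in M. real_cond_exp M F (\<lambda>\<omega>. \<xi> \<omega> $ c) \<omega> = 0"
    proof (rule real_cond_exp_charact)
      fix A assume A: "A \<in> sets F"
      then have "A \<in> sets M" using F by (auto simp: subalgebra_def)
      have "(\<integral>\<omega>. indicator A \<omega> *\<^sub>R \<xi> \<omega> \<partial>M) $ c = (\<integral>\<omega>. (indicator A \<omega> *\<^sub>R \<xi> \<omega>) $ c \<partial>M)"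
        using integral_bounded_linear[OF bounded_linear_vec_nth
            integrable_mult_indicator[OF \<open>A \<in> sets M\<close> square_integrable_integrable[OF M \<xi>]]]
        by simp
      then show "(\<integral>\<omega>\<in>A. \<xi> \<omega> $ c \<partial>M) = (\<integral>\<omega>\<in>A. 0 \<partial>M)"
        using zero[OF A] unfolding set_lebesgue_integral_def by simp
    qed (use int_\<xi> in auto)
    then have "AE \<omega> in M. X \<omega> $ c * real_cond_exp M F (\<lambda>\<omega>. \<xi> \<omega> $ c) \<omega> = 0"
      by eventually_elim simp
    then have "(\<integral>\<omega>. X \<omega> $ c * real_cond_exp M F (\<lambda>\<omega>. \<xi> \<omega> $ c) \<omega> \<partial>M) = 0"
      by (rule integral_eq_zero_AE)
    moreover have "(\<integral>\<omega>. X \<omega> $ c * real_cond_exp M F (\<lambda>\<omega>. \<xi> \<omega> $ c) \<omega> \<partial>M)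
        = (\<integral>\<omega>. X \<omega> $ c * \<xi> \<omega> $ c \<partial>M)"
      using borel_measurable_vec_nth[OF X(1)] int_X\<xi> int_\<xi> by (intro real_cond_exp_intg(2)) auto
    ultimately show ?thesis by simp
  qed
  have "(\<integral>\<omega>. X \<omega> \<bullet> \<xi> \<omega> \<partial>M) = (\<Sum>c\<in>UNIV. \<integral>\<omega>. X \<omega> $ c * \<xi> \<omega> $ c \<partial>M)"
    unfolding inner_vec_def using int_X\<xi> by (simp add: Bochner_Integration.integral_sum)
  then show ?thesis using component by simp
qed

lemma integral_double_sum:
  fixes h :: "'i \<Rightarrow> 'j \<Rightarrow> 'a \<Rightarrow> real"
  assumes "\<And>i j. i \<in> A \<Longrightarrow> j \<in> B \<Longrightarrow> integrable M (h i j)"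
  shows "integrable M (\<lambda>\<omega>. \<Sum>i\<in>A. \<Sum>j\<in>B. c i j * h i j \<omega>)"
    and "(\<integral>\<omega>. (\<Sum>i\<in>A. \<Sum>j\<in>B. c i j * h i j \<omega>) \<partial>M) = (\<Sum>i\<in>A. \<Sum>j\<in>B. c i j * (\<integral>\<omega>. h i j \<omega> \<partial>M))"
  using assms by (auto simp: Bochner_Integration.integral_sum Bochner_Integration.integrable_sum)

lemma integral_norm_sum_orthogonal:
  fixes X :: "'i \<Rightarrow> 'a \<Rightarrow> 'b::euclidean_space"
  assumes "finite I" and sq: "\<And>i. i \<in> I \<Longrightarrow> square_integrable M (X i)"
    and orth: "\<And>i j. i \<in> I \<Longrightarrow> j \<in> I \<Longrightarrow> i \<noteq> j \<Longrightarrow> (\<integral>\<omega>. X i \<omega> \<bullet> X j \<omega> \<partial>M) = 0"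
  shows "(\<integral>\<omega>. (norm (\<Sum>i\<in>I. c i *\<^sub>R X i \<omega>))\<^sup>2 \<partial>M) = (\<Sum>i\<in>I. (c i)\<^sup>2 * (\<integral>\<omega>. (norm (X i \<omega>))\<^sup>2 \<partial>M))"
proof -
  have int: "integrable M (\<lambda>\<omega>. X i \<omega> \<bullet> X j \<omega>)" if "i \<in> I" "j \<in> I" for i j
    using integrable_inner_square_integrable[OF sq sq] that .
  have "(\<integral>\<omega>. (norm (\<Sum>i\<in>I. c i *\<^sub>R X i \<omega>))\<^sup>2 \<partial>M)
      = (\<integral>\<omega>. (\<Sum>i\<in>I. \<Sum>j\<in>I. c i * c j * (X j \<omega> \<bullet> X i \<omega>)) \<partial>M)"
    by (simp add: power2_norm_eq_inner inner_sum_left inner_sum_right sum_distrib_left mult.assoc)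
  also have "\<dots> = (\<Sum>i\<in>I. \<Sum>j\<in>I. c i * c j * (\<integral>\<omega>. X j \<omega> \<bullet> X i \<omega> \<partial>M))"
    using int by (simp add: Bochner_Integration.integral_sum Bochner_Integration.integrable_sum)
  also have "\<dots> = (\<Sum>i\<in>I. \<Sum>j\<in>I. if j = i then c i * c i * (\<integral>\<omega>. X i \<omega> \<bullet> X i \<omega> \<partial>M) else 0)"
    using orth by (intro sum.cong refl) auto
  finally show ?thesis
    unfolding power2_norm_eq_inner using \<open>finite I\<close> by (simp add: power2_eq_square)
qed

section \<open>One round of FedSLoP\<close>

locale fedslop_round =
  fixes M :: "'w measure"
    and P :: "'w \<Rightarrow> real^'r^'d"
    and g :: "nat \<Rightarrow> nat \<Rightarrow> 'w \<Rightarrow> real^'d"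
    and F :: "nat \<Rightarrow> real^'d \<Rightarrow> real" and gF :: "nat \<Rightarrow> real^'d \<Rightarrow> real^'d"
    and f :: "real^'d \<Rightarrow> real" and gf :: "real^'d \<Rightarrow> real^'d"
    and N \<tau> :: nat and \<mu> \<eta> L \<sigma>L \<sigma>G :: real and \<theta>0 :: "real^'d"
  assumes gf_def: "gf = (\<lambda>\<theta>. (1 / real N) *\<^sub>R (\<Sum>i<N. gF i \<theta>))"
    and N_pos: "N \<ge> 1" and tau_pos: "\<tau> \<ge> 1"
    and r_le_d: "CARD('r) \<le> CARD('d)"
    and mu: "0 \<le> \<mu>" "\<mu> < 1" and eta_pos: "\<eta> > 0" and L_pos: "L > 0"
    and f_smooth: "L_smooth L f gf"
    and F_smooth: "\<forall>i<N. L_smooth L (F i) (gF i)"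
    and M: "prob_space M"
    and P_meas: "P \<in> borel_measurable M"
    and P_haar: "haar_stiefel (distr M borel P)"
    and g_meas: "\<forall>i<N. \<forall>s<\<tau>. g i s \<in> borel_measurable M"
    and unbiased: "\<forall>i<N. \<forall>s<\<tau>. integrable M (g i s) \<and>
        (\<forall>A \<in> sets (info_sigma M P g N \<tau> i s).
           (\<integral>\<omega>. indicator A \<omega> *\<^sub>R g i s \<omega> \<partial>M) =
           (\<integral>\<omega>. indicator A \<omega> *\<^sub>R
               gF i (fst (local_iter \<eta> \<mu> (P \<omega> ** transpose (P \<omega>)) (\<lambda>s'. g i s' \<omega>) \<theta>0 s)) \<partial>M))"
    and var_bound: "\<forall>i<N. \<forall>s<\<tau>.
        integrable M (\<lambda>\<omega>. (norm (g i s \<omega> -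
           gF i (fst (local_iter \<eta> \<mu> (P \<omega> ** transpose (P \<omega>)) (\<lambda>s'. g i s' \<omega>) \<theta>0 s))))\<^sup>2) \<and>
        (\<forall>A \<in> sets (info_sigma M P g N \<tau> i s).
           (\<integral>\<omega>. indicator A \<omega> * (norm (g i s \<omega> -
              gF i (fst (local_iter \<eta> \<mu> (P \<omega> ** transpose (P \<omega>)) (\<lambda>s'. g i s' \<omega>) \<theta>0 s))))\<^sup>2 \<partial>M)
           \<le> \<sigma>L\<^sup>2 * measure M A)"
    and heterogeneity: "\<forall>i<N. \<forall>\<theta>. (norm (gF i \<theta> - gf \<theta>))\<^sup>2 \<le> \<sigma>G\<^sup>2"
    and eta1: "\<eta> \<le> sqrt ((1 - \<mu>\<^sup>2) / (6 * L\<^sup>2 * real \<tau> ^ 3))"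
    and eta2: "\<eta> \<le> 1 / (L * S_tau \<mu> \<tau>)"
begin

definition proj :: "'w \<Rightarrow> real^'d^'d" where
  "proj \<omega> = P \<omega> ** transpose (P \<omega>)"

definition theta :: "nat \<Rightarrow> nat \<Rightarrow> 'w \<Rightarrow> real^'d" where
  "theta i s \<omega> = fst (local_iter \<eta> \<mu> (proj \<omega>) (\<lambda>s'. g i s' \<omega>) \<theta>0 s)"

definition noise :: "nat \<Rightarrow> nat \<Rightarrow> 'w \<Rightarrow> real^'d" where
  "noise i s \<omega> = g i s \<omega> - gF i (theta i s \<omega>)"

abbreviation info :: "nat \<Rightarrow> nat \<Rightarrow> 'w measure" where
  "info i s \<equiv> info_sigma M P g N \<tau> i s"

definition info_generators :: "nat \<Rightarrow> nat \<Rightarrow> 'w set set" where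
  "info_generators i s = {P -` A \<inter> space M | A. A \<in> sets borel} \<union>
      {g j s' -` A \<inter> space M | j s' A. j < N \<and> s' < \<tau> \<and> (j \<noteq> i \<or> s' < s) \<and> A \<in> sets borel}"

lemma finite_measure_M: "finite_measure M"
  using M by (simp add: prob_space_def)

lemma info_eq_sigma: "info i s = sigma (space M) (info_generators i s)"
  unfolding info_sigma_def info_generators_def ..

lemma info_generators_subset: "info_generators i s \<subseteq> sets M"
  using measurable_sets[OF P_meas] measurable_sets[of "g _ _" M borel] g_meas
  unfolding info_generators_def by blast

lemma space_info [simp]: "space (info i s) = space M"
  unfolding info_eq_sigma by (simp add: space_measure_of_conv)

lemma sets_info: "sets (info i s) = sigma_sets (space M) (info_generators i s)"
  unfolding info_eq_sigma using info_generators_subset sets.sets_into_space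
  by (intro sets_measure_of) blast

lemma subalgebra_info: "subalgebra M (info i s)"
  unfolding subalgebra_def sets_info using sets.sigma_sets_subset[OF info_generators_subset] by simp

lemma measurable_info_generators:
  fixes X :: "'w \<Rightarrow> 'b::topological_space"
  assumes "\<And>A. A \<in> sets borel \<Longrightarrow> X -` A \<inter> space M \<in> info_generators i s"
  shows "X \<in> borel_measurable (info i s)"
proof (rule measurableI)
  fix A :: "'b set" assume "A \<in> sets borel"
  then show "X -` A \<inter> space (info i s) \<in> sets (info i s)"
    unfolding sets_info using assms by (auto intro: sigma_sets.Basic)
qed simp

lemma P_measurable_info: "P \<in> borel_measurable (info i s)"
  by (rule measurable_info_generators) (auto simp: info_generators_def)

lemma g_measurable_info:
  "j < N \<Longrightarrow> k < \<tau> \<Longrightarrow> j \<noteq> i \<or> k < s \<Longrightarrow> g j k \<in> borel_measurable (info i s)"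
  by (rule measurable_info_generators, unfold info_generators_def) blast

lemma proj_measurable: "P \<in> borel_measurable F' \<Longrightarrow> proj \<in> borel_measurable F'"
  unfolding proj_def[abs_def] matrix_matrix_mult_def transpose_def
  by (rule borel_measurable_continuous_on[OF _ _]) (intro continuous_intros, assumption)

lemma theta_measurable:
  assumes "P \<in> borel_measurable F'" "\<forall>k<s. g i k \<in> borel_measurable F'"
  shows "theta i s \<in> borel_measurable F'"
  using borel_measurable_local_iter[OF proj_measurable[OF assms(1)] assms(2)]
  unfolding theta_def[abs_def] by blast

lemma gF_continuous: "i < N \<Longrightarrow> continuous_on UNIV (gF i)"
  using F_smooth L_pos by (intro L_smooth_gradient_continuous[of L "F i"]) auto

lemma noise_measurable:
  assumes "i < N" "P \<in> borel_measurable F'" "\<forall>k\<le>s. g i k \<in> borel_measurable F'"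
  shows "noise i s \<in> borel_measurable F'"
  unfolding noise_def[abs_def] using assms
  by (intro borel_measurable_diff borel_measurable_continuous_on[OF gF_continuous] theta_measurable)
    auto

lemma theta_measurable_M: "i < N \<Longrightarrow> s \<le> \<tau> \<Longrightarrow> theta i s \<in> borel_measurable M"
  using g_meas P_meas by (intro theta_measurable) auto

lemma noise_measurable_info:
  "i < N \<Longrightarrow> j < N \<Longrightarrow> k < \<tau> \<Longrightarrow> j \<noteq> i \<or> k < s \<Longrightarrow> noise j k \<in> borel_measurable (info i s)"
  by (intro noise_measurable P_measurable_info allI impI g_measurable_info) auto

lemma AE_orthogonal_projection_proj: "AE \<omega> in M. orthogonal_projection_matrix (proj \<omega>)"
proof -
  have "AE Q in distr M borel P. Q \<in> stiefel"
    by (rule haar_stiefel_AE_stiefel[OF P_haar])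
  moreover have "stiefel \<in> sets (borel :: (real^'r^'d) measure)"
    using P_haar unfolding haar_stiefel_def by simp
  ultimately have "AE \<omega> in M. P \<omega> \<in> stiefel"
    by (simp add: AE_distr_iff[OF P_meas])
  then show ?thesis
    unfolding proj_def by eventually_elim (rule stiefel_orthogonal_projection_matrix)
qed

lemma gF_lipschitz: "i < N \<Longrightarrow> norm (gF i a - gF i b) \<le> L * norm (a - b)"
  using F_smooth unfolding L_smooth_def by blast

lemma square_integrable_proj_mult:
  assumes "square_integrable M X"
  shows "square_integrable M (\<lambda>\<omega>. proj \<omega> *v X \<omega>)"
proof (rule square_integrable_dominated[OF finite_measure_M assms, of _ 0 1])
  show "(\<lambda>\<omega>. proj \<omega> *v X \<omega>) \<in> borel_measurable M"
    using assms proj_measurable[OF P_meas] unfolding square_integrable_def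
    by (intro borel_measurable_matrix_vector_mult) auto
  show "AE \<omega> in M. norm (proj \<omega> *v X \<omega>) \<le> 0 + 1 * norm (X \<omega>)"
    using AE_orthogonal_projection_proj by eventually_elim (simp add: orthogonal_projection_norm_le)
qed

lemma square_integrable_theta:
  assumes "\<forall>k<s. square_integrable M (g i k)"
  shows "square_integrable M (theta i s)"
proof -
  have "square_integrable M
      (\<lambda>\<omega>. \<theta>0 - \<eta> *\<^sub>R (\<Sum>k<s. (\<Sum>j<s - k. \<mu> ^ j) *\<^sub>R (proj \<omega> *v g i k \<omega>)))"
    using assms finite_measure_M
    by (intro square_integrable_diff square_integrable_const square_integrable_scaleR
        square_integrable_sum square_integrable_proj_mult) auto
  then show ?thesis
    unfolding theta_def[abs_def] local_iter_fst_eq .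
qed

lemma square_integrable_gF_theta:
  assumes "i < N" "s \<le> \<tau>" "square_integrable M (theta i s)"
  shows "square_integrable M (\<lambda>\<omega>. gF i (theta i s \<omega>))"
proof (rule square_integrable_dominated[OF finite_measure_M assms(3), of _ "norm (gF i \<theta>0) + L * norm \<theta>0" L])
  show "(\<lambda>\<omega>. gF i (theta i s \<omega>)) \<in> borel_measurable M"
    using assms theta_measurable_M by (intro borel_measurable_continuous_on[OF gF_continuous]) auto
  have "norm (gF i (theta i s \<omega>)) \<le> norm (gF i \<theta>0) + L * norm \<theta>0 + L * norm (theta i s \<omega>)" for \<omega>
  proof -
    have "norm (gF i (theta i s \<omega>)) \<le> norm (gF i \<theta>0) + L * norm (theta i s \<omega> - \<theta>0)"
      using norm_triangle_ineq[of "gF i \<theta>0" "gF i (theta i s \<omega>) - gF i \<theta>0"]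
        gF_lipschitz[OF assms(1), of "theta i s \<omega>" \<theta>0] by simp
    moreover have "L * norm (theta i s \<omega> - \<theta>0) \<le> L * norm (theta i s \<omega>) + L * norm \<theta>0"
      using L_pos norm_triangle_ineq4[of "theta i s \<omega>" \<theta>0] by (simp add: distrib_left[symmetric])
    ultimately show ?thesis by linarith
  qed
  then show "AE \<omega> in M. norm (gF i (theta i s \<omega>)) \<le> norm (gF i \<theta>0) + L * norm \<theta>0 + L * norm (theta i s \<omega>)"
    by simp
qed

lemma square_integrable_noise: "i < N \<Longrightarrow> s < \<tau> \<Longrightarrow> square_integrable M (noise i s)"
  using var_bound g_meas P_meas unfolding square_integrable_def
  by (auto intro: noise_measurable simp: noise_def theta_def proj_def)

text \<open>Square integrability propagates along the local iteration: \<open>g\<^sub>i\<^sub>,\<^sub>s\<close> is the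
  noise plus the gradient at \<open>\<theta>\<^sub>i\<^sub>,\<^sub>s\<close>, which only depends on earlier stochastic gradients.\<close>
lemma square_integrable_g: "i < N \<Longrightarrow> k < \<tau> \<Longrightarrow> square_integrable M (g i k)"
proof -
  assume i: "i < N"
  have "s \<le> \<tau> \<Longrightarrow> \<forall>k<s. square_integrable M (g i k)" for s
  proof (induction s)
    case (Suc s)
    then have "square_integrable M (\<lambda>\<omega>. noise i s \<omega> + gF i (theta i s \<omega>))"
      using i by (intro square_integrable_add square_integrable_noise square_integrable_gF_theta
          square_integrable_theta) auto
    then show ?case using Suc less_Suc_eq by (auto simp: noise_def)
  qed simp
  then show "k < \<tau> \<Longrightarrow> square_integrable M (g i k)" by blast
qed

lemma square_integrable_theta_diff: "i < N \<Longrightarrow> s \<le> \<tau> \<Longrightarrow> square_integrable M (\<lambda>\<omega>. theta i s \<omega> - \<theta>0)"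
  using square_integrable_g finite_measure_M
  by (intro square_integrable_diff square_integrable_theta square_integrable_const) auto

lemma set_integral_noise_eq_0:
  assumes "i < N" "s < \<tau>" "A \<in> sets (info i s)"
  shows "(\<integral>\<omega>. indicator A \<omega> *\<^sub>R noise i s \<omega> \<partial>M) = 0"
proof -
  have A: "A \<in> sets M" using assms(3) subalgebra_info by (auto simp: subalgebra_def)
  have "integrable M (\<lambda>\<omega>. indicator A \<omega> *\<^sub>R X \<omega>)" if "square_integrable M X" for X :: "'w \<Rightarrow> real^'d"
    using integrable_mult_indicator[OF A square_integrable_integrable[OF finite_measure_M that]] .
  then show ?thesis
    using assms unbiased square_integrable_g square_integrable_gF_theta[OF _ _ square_integrable_theta]
    by (simp add: noise_def scaleR_diff_right theta_def proj_def)
qed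

lemma integral_inner_noise_eq_0:
  assumes "i < N" "s < \<tau>" "X \<in> borel_measurable (info i s)" "square_integrable M X"
  shows "(\<integral>\<omega>. X \<omega> \<bullet> noise i s \<omega> \<partial>M) = 0"
  using assms
  by (intro integral_inner_eq_0_if_set_integrals_eq_0[OF finite_measure_M subalgebra_info]
      square_integrable_noise set_integral_noise_eq_0)

lemma integral_inner_noise_noise_eq_0:
  assumes "i < N" "j < N" "q < \<tau>" "k < \<tau>" "(i, q) \<noteq> (j, k)"
  shows "(\<integral>\<omega>. noise i q \<omega> \<bullet> noise j k \<omega> \<partial>M) = 0"
proof (cases "j \<noteq> i \<or> k < q")
  case True
  then have "(\<integral>\<omega>. noise j k \<omega> \<bullet> noise i q \<omega> \<partial>M) = 0"
    using assms
    by (intro integral_inner_noise_eq_0 noise_measurable_info square_integrable_noise) auto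
  then show ?thesis by (simp add: inner_commute)
next
  case False
  then show ?thesis
    using assms
    by (intro integral_inner_noise_eq_0 noise_measurable_info square_integrable_noise) auto
qed

lemma integral_norm_noise_le: "i < N \<Longrightarrow> s < \<tau> \<Longrightarrow> (\<integral>\<omega>. (norm (noise i s \<omega>))\<^sup>2 \<partial>M) \<le> \<sigma>L\<^sup>2"
  using var_bound sets.top[of "info i s"] prob_space.prob_space[OF M]
  by (force simp: noise_def theta_def proj_def indicator_def cong: Bochner_Integration.integral_cong)

lemma norm_g_squared_le:
  assumes "i < N"
  shows "(norm (g i k \<omega>))\<^sup>2
    \<le> 4 * ((norm (noise i k \<omega>))\<^sup>2 + L\<^sup>2 * (norm (theta i k \<omega> - \<theta>0))\<^sup>2 + \<sigma>G\<^sup>2 + (norm (gf \<theta>0))\<^sup>2)"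
proof -
  have "g i k \<omega> = noise i k \<omega> + (gF i (theta i k \<omega>) - gF i \<theta>0) + (gF i \<theta>0 - gf \<theta>0) + gf \<theta>0"
    unfolding noise_def by simp
  then have "(norm (g i k \<omega>))\<^sup>2 \<le> 4 * ((norm (noise i k \<omega>))\<^sup>2 + (norm (gF i (theta i k \<omega>) - gF i \<theta>0))\<^sup>2
      + (norm (gF i \<theta>0 - gf \<theta>0))\<^sup>2 + (norm (gf \<theta>0))\<^sup>2)"
    using norm_add4_squared_le by metis
  also have "\<dots> \<le> 4 * ((norm (noise i k \<omega>))\<^sup>2 + L\<^sup>2 * (norm (theta i k \<omega> - \<theta>0))\<^sup>2
      + \<sigma>G\<^sup>2 + (norm (gf \<theta>0))\<^sup>2)"
  proof -
    have "norm (gF i (theta i k \<omega>) - gF i \<theta>0) \<le> L * norm (theta i k \<omega> - \<theta>0)"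
      by (rule gF_lipschitz[OF assms])
    then have "(norm (gF i (theta i k \<omega>) - gF i \<theta>0))\<^sup>2 \<le> L\<^sup>2 * (norm (theta i k \<omega> - \<theta>0))\<^sup>2"
      by (simp add: power_mono flip: power_mult_distrib)
    moreover have "(norm (gF i \<theta>0 - gf \<theta>0))\<^sup>2 \<le> \<sigma>G\<^sup>2"
      using heterogeneity assms by blast
    ultimately show ?thesis by (intro mult_left_mono add_mono) auto
  qed
  finally show ?thesis .
qed

lemma AE_norm_theta_diff_le:
  "AE \<omega> in M. (norm (theta i q \<omega> - \<theta>0))\<^sup>2 \<le> \<eta>\<^sup>2 * (real q)\<^sup>2 * (\<Sum>k<q. (norm (g i k \<omega>))\<^sup>2) / (1 - \<mu>\<^sup>2)"
  using AE_orthogonal_projection_proj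
  by eventually_elim
    (unfold theta_def, rule norm_local_iter_fst_diff_le[OF mu orthogonal_projection_norm_le])

lemma integrable_norm_theta_diff: "i < N \<Longrightarrow> s \<le> \<tau> \<Longrightarrow> integrable M (\<lambda>\<omega>. (norm (theta i s \<omega> - \<theta>0))\<^sup>2)"
  using square_integrable_theta_diff unfolding square_integrable_def by blast

lemma integrable_norm_noise: "i < N \<Longrightarrow> s < \<tau> \<Longrightarrow> integrable M (\<lambda>\<omega>. (norm (noise i s \<omega>))\<^sup>2)"
  using square_integrable_noise unfolding square_integrable_def by blast

lemma integral_norm_theta_diff_le_sum:
  assumes "i < N" "q \<le> \<tau>"
  shows "(\<integral>\<omega>. (norm (theta i q \<omega> - \<theta>0))\<^sup>2 \<partial>M)
    \<le> \<eta>\<^sup>2 * (real q)\<^sup>2 / (1 - \<mu>\<^sup>2) * (\<Sum>k<q. 4 * (\<sigma>L\<^sup>2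
         + L\<^sup>2 * (\<integral>\<omega>. (norm (theta i k \<omega> - \<theta>0))\<^sup>2 \<partial>M) + \<sigma>G\<^sup>2 + (norm (gf \<theta>0))\<^sup>2))"
proof -
  define c where "c = \<eta>\<^sup>2 * (real q)\<^sup>2 / (1 - \<mu>\<^sup>2)"
  have c: "0 \<le> c" unfolding c_def using one_minus_square_pos[OF mu] by simp
  define R where "R k \<omega> = 4 * ((norm (noise i k \<omega>))\<^sup>2 + L\<^sup>2 * (norm (theta i k \<omega> - \<theta>0))\<^sup>2
      + \<sigma>G\<^sup>2 + (norm (gf \<theta>0))\<^sup>2)" for k \<omega>
  have int_R: "integrable M (R k)" if "k < q" for k
    unfolding R_def[abs_def] using that assms finite_measure_M
    by (intro integrable_mult_right Bochner_Integration.integrable_add finite_measure.integrable_const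
        integrable_norm_noise integrable_norm_theta_diff) auto
  have "(\<integral>\<omega>. (norm (theta i q \<omega> - \<theta>0))\<^sup>2 \<partial>M) \<le> (\<integral>\<omega>. c * (\<Sum>k<q. R k \<omega>) \<partial>M)"
  proof (rule integral_mono_AE)
    show "AE \<omega> in M. (norm (theta i q \<omega> - \<theta>0))\<^sup>2 \<le> c * (\<Sum>k<q. R k \<omega>)"
      using AE_norm_theta_diff_le[of i q]
    proof eventually_elim
      case (elim \<omega>)
      have "c * (\<Sum>k<q. (norm (g i k \<omega>))\<^sup>2) \<le> c * (\<Sum>k<q. R k \<omega>)"
        unfolding R_def using c by (intro mult_left_mono sum_mono norm_g_squared_le[OF assms(1)])
      then show ?case using elim unfolding c_def by simp
    qed
  qed (use assms int_R integrable_norm_theta_diff in auto)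
  also have "\<dots> = c * (\<Sum>k<q. \<integral>\<omega>. R k \<omega> \<partial>M)"
    using int_R by (simp add: Bochner_Integration.integral_sum)
  also have "\<dots> \<le> c * (\<Sum>k<q. 4 * (\<sigma>L\<^sup>2 + L\<^sup>2 * (\<integral>\<omega>. (norm (theta i k \<omega> - \<theta>0))\<^sup>2 \<partial>M)
      + \<sigma>G\<^sup>2 + (norm (gf \<theta>0))\<^sup>2))"
  proof (intro mult_left_mono[OF _ c] sum_mono)
    fix k assume "k \<in> {..<q}"
    then have k: "k < q" "k < \<tau>" using assms by auto
    have "(\<integral>\<omega>. R k \<omega> \<partial>M) = 4 * ((\<integral>\<omega>. (norm (noise i k \<omega>))\<^sup>2 \<partial>M)
        + L\<^sup>2 * (\<integral>\<omega>. (norm (theta i k \<omega> - \<theta>0))\<^sup>2 \<partial>M) + \<sigma>G\<^sup>2 + (norm (gf \<theta>0))\<^sup>2)"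
      unfolding R_def using k assms prob_space.prob_space[OF M]
        integrable_norm_noise[OF assms(1) k(2)] integrable_norm_theta_diff[OF assms(1), of k]
      by (simp add: Bochner_Integration.integral_add Bochner_Integration.integrable_add
          finite_measure.integrable_const[OF finite_measure_M])
    then show "(\<integral>\<omega>. R k \<omega> \<partial>M) \<le> 4 * (\<sigma>L\<^sup>2 + L\<^sup>2 * (\<integral>\<omega>. (norm (theta i k \<omega> - \<theta>0))\<^sup>2 \<partial>M)
        + \<sigma>G\<^sup>2 + (norm (gf \<theta>0))\<^sup>2)"
      using integral_norm_noise_le[OF assms(1) k(2)] by simp
  qed
  finally show ?thesis unfolding c_def .
qed

definition drift_bound :: real where
  "drift_bound = 12 * \<eta>\<^sup>2 * real \<tau> ^ 3 / (1 - \<mu>\<^sup>2) * (\<sigma>L\<^sup>2 + \<sigma>G\<^sup>2 + (norm (gf \<theta>0))\<^sup>2)"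

lemma drift_bound_nonneg: "0 \<le> drift_bound"
  unfolding drift_bound_def using one_minus_square_pos[OF mu] by simp

text \<open>The step-size condition \<open>6 L\<^sup>2 \<tau>\<^sup>3 \<eta>\<^sup>2 \<le> 1 - \<mu>\<^sup>2\<close> makes \<open>drift_bound\<close> a fixed point
  of the recursive estimate of \<open>integral_norm_theta_diff_le_sum\<close>.\<close>
lemma drift_bound_fixed_point:
  assumes "q \<le> \<tau>"
  shows "\<eta>\<^sup>2 * (real q)\<^sup>2 / (1 - \<mu>\<^sup>2) * (\<Sum>k<q. 4 * (\<sigma>L\<^sup>2 + L\<^sup>2 * drift_bound + \<sigma>G\<^sup>2 + (norm (gf \<theta>0))\<^sup>2))
    \<le> drift_bound"
proof -
  define c where "c = \<eta>\<^sup>2 * real \<tau> ^ 3 / (1 - \<mu>\<^sup>2)"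
  define s where "s = \<sigma>L\<^sup>2 + \<sigma>G\<^sup>2 + (norm (gf \<theta>0))\<^sup>2"
  have m2: "0 < 1 - \<mu>\<^sup>2" by (rule one_minus_square_pos[OF mu])
  have K: "drift_bound = 12 * c * s"
    unfolding drift_bound_def c_def s_def by simp
  have "\<eta>\<^sup>2 \<le> (1 - \<mu>\<^sup>2) / (6 * L\<^sup>2 * real \<tau> ^ 3)"
    using power_mono[OF eta1, of 2] eta_pos m2 L_pos tau_pos by simp
  then have cL: "4 * c * L\<^sup>2 \<le> 2 / 3"
    unfolding c_def using m2 L_pos tau_pos by (simp add: field_simps)
  have "real q ^ 3 \<le> real \<tau> ^ 3"
    using assms by (intro power_mono) auto
  then have "\<eta>\<^sup>2 * ((real q)\<^sup>2 * real q) / (1 - \<mu>\<^sup>2) \<le> c"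
    unfolding c_def using m2
    by (intro divide_right_mono mult_left_mono) (auto simp: power2_eq_square power3_eq_cube)
  then have "\<eta>\<^sup>2 * (real q)\<^sup>2 / (1 - \<mu>\<^sup>2) * real q * (4 * (L\<^sup>2 * drift_bound + s))
      \<le> c * (4 * (L\<^sup>2 * drift_bound + s))"
    using drift_bound_nonneg unfolding s_def by (intro mult_right_mono) auto
  also have "\<dots> = (4 * c * L\<^sup>2) * drift_bound + drift_bound / 3"
    unfolding K by (simp add: algebra_simps)
  also have "\<dots> \<le> drift_bound"
    using mult_right_mono[OF cL drift_bound_nonneg] by simp
  finally show ?thesis
    unfolding s_def by (simp add: mult.assoc algebra_simps)
qed

lemma integral_norm_theta_diff_le:
  assumes "i < N"
  shows "q < \<tau> \<Longrightarrow> (\<integral>\<omega>. (norm (theta i q \<omega> - \<theta>0))\<^sup>2 \<partial>M) \<le> drift_bound"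
proof (induction q rule: less_induct)
  case (less q)
  have "(\<Sum>k<q. 4 * (\<sigma>L\<^sup>2 + L\<^sup>2 * (\<integral>\<omega>. (norm (theta i k \<omega> - \<theta>0))\<^sup>2 \<partial>M) + \<sigma>G\<^sup>2 + (norm (gf \<theta>0))\<^sup>2))
      \<le> (\<Sum>k<q. 4 * (\<sigma>L\<^sup>2 + L\<^sup>2 * drift_bound + \<sigma>G\<^sup>2 + (norm (gf \<theta>0))\<^sup>2))"
    using less by (intro sum_mono) (simp add: mult_left_mono)
  then have "\<eta>\<^sup>2 * (real q)\<^sup>2 / (1 - \<mu>\<^sup>2) * (\<Sum>k<q. 4 * (\<sigma>L\<^sup>2 + L\<^sup>2 * (\<integral>\<omega>. (norm (theta i k \<omega> - \<theta>0))\<^sup>2 \<partial>M)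
      + \<sigma>G\<^sup>2 + (norm (gf \<theta>0))\<^sup>2))
      \<le> \<eta>\<^sup>2 * (real q)\<^sup>2 / (1 - \<mu>\<^sup>2) * (\<Sum>k<q. 4 * (\<sigma>L\<^sup>2 + L\<^sup>2 * drift_bound + \<sigma>G\<^sup>2 + (norm (gf \<theta>0))\<^sup>2))"
    using one_minus_square_pos[OF mu] by (intro mult_left_mono) auto
  also have "\<dots> \<le> drift_bound"
    using less.prems by (intro drift_bound_fixed_point) simp
  finally show ?case
    using integral_norm_theta_diff_le_sum[OF assms, of q] less.prems by simp
qed

abbreviation \<alpha> :: "nat \<Rightarrow> real" where
  "\<alpha> q \<equiv> alpha_w \<mu> \<tau> q"

abbreviation S :: real where
  "S \<equiv> S_tau \<mu> \<tau>"

lemma S_pos: "0 < S"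
  using S_tau_pos[OF mu tau_pos] .

lemma sum_alpha: "(\<Sum>q<\<tau>. \<alpha> q) = S"
  by (simp add: S_tau_def)

lemma alpha_nonneg: "0 \<le> \<alpha> q"
  using alpha_w_nonneg[OF mu] .

lemma alpha_le_S: "q < \<tau> \<Longrightarrow> \<alpha> q \<le> S"
  using member_le_sum[of q "{..<\<tau>}" \<alpha>] alpha_nonneg by (simp add: sum_alpha)

lemma L_eta_S_le_1: "L * \<eta> * S \<le> 1"
  using eta2 L_pos S_pos by (simp add: le_divide_eq mult_ac)

definition avg_grad :: "'w \<Rightarrow> real^'d" where
  "avg_grad \<omega> = (1 / (real N * S)) *\<^sub>R (\<Sum>i<N. \<Sum>q<\<tau>. \<alpha> q *\<^sub>R gF i (theta i q \<omega>))"

definition avg_noise :: "'w \<Rightarrow> real^'d" where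
  "avg_noise \<omega> = (1 / real N) *\<^sub>R (\<Sum>i<N. \<Sum>q<\<tau>. \<alpha> q *\<^sub>R noise i q \<omega>)"

definition theta_next :: "'w \<Rightarrow> real^'d" where
  "theta_next \<omega> = \<theta>0 + (1 / real N) *\<^sub>R (\<Sum>i<N. theta i \<tau> \<omega> - \<theta>0)"

definition drift :: "'w \<Rightarrow> real" where
  "drift \<omega> = (\<Sum>i<N. \<Sum>q<\<tau>. \<alpha> q * (norm (theta i q \<omega> - \<theta>0))\<^sup>2)"

lemma theta_next_diff_eq:
  "theta_next \<omega> - \<theta>0 = - \<eta> *\<^sub>R (proj \<omega> *v (S *\<^sub>R avg_grad \<omega> + avg_noise \<omega>))"
proof -
  define G where "G = (\<Sum>i<N. \<Sum>q<\<tau>. \<alpha> q *\<^sub>R g i q \<omega>)"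
  have "theta i \<tau> \<omega> - \<theta>0 = - \<eta> *\<^sub>R (\<Sum>q<\<tau>. \<alpha> q *\<^sub>R (proj \<omega> *v g i q \<omega>))" for i
    unfolding theta_def local_iter_fst_alpha_w[OF mu(2)] by simp
  then have "theta_next \<omega> - \<theta>0 = - \<eta> *\<^sub>R (proj \<omega> *v ((1 / real N) *\<^sub>R G))"
    unfolding theta_next_def G_def
    by (simp add: scaleR_sum_right matrix_vector_mult_scaleR vec.sum)
  moreover have "S *\<^sub>R avg_grad \<omega> + avg_noise \<omega> = (1 / real N) *\<^sub>R G"
    unfolding avg_grad_def avg_noise_def G_def noise_def using S_pos
    by (simp add: scaleR_diff_right sum_subtractf)
  ultimately show ?thesis by simp
qed

lemma norm_avg_grad_diff_le:
  "(norm (avg_grad \<omega> - gf \<theta>0))\<^sup>2 \<le> L\<^sup>2 / (real N * S) * drift \<omega>"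
proof -
  define I :: "(nat \<times> nat) set" where "I = {..<N} \<times> {..<\<tau>}"
  define w :: "nat \<times> nat \<Rightarrow> real" where "w = (\<lambda>(i, q). \<alpha> q / (real N * S))"
  define z where "z = (\<lambda>(i, q). gF i (theta i q \<omega>) - gF i \<theta>0)"
  define d where "d = (\<lambda>(i, q). theta i q \<omega> - \<theta>0)"
  have N: "0 < real N" using N_pos by simp
  have w: "0 \<le> w p" for p
    unfolding w_def using alpha_nonneg S_pos N by (simp add: split_beta)
  have "(\<Sum>q<\<tau>. (\<alpha> q / (real N * S)) *\<^sub>R gF i \<theta>0) = (1 / real N) *\<^sub>R gF i \<theta>0" for i
    using S_pos by (simp add: scaleR_sum_left[symmetric] sum_divide_distrib[symmetric] sum_alpha)
  then have "avg_grad \<omega> - gf \<theta>0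
      = (\<Sum>i<N. \<Sum>q<\<tau>. (\<alpha> q / (real N * S)) *\<^sub>R (gF i (theta i q \<omega>) - gF i \<theta>0))"
    unfolding avg_grad_def gf_def by (simp add: scaleR_diff_right sum_subtractf scaleR_sum_right)
  also have "\<dots> = (\<Sum>p\<in>I. w p *\<^sub>R z p)"
    unfolding I_def w_def z_def by (simp add: sum.cartesian_product split_def)
  finally have "(norm (avg_grad \<omega> - gf \<theta>0))\<^sup>2 \<le> (\<Sum>p\<in>I. w p) * (\<Sum>p\<in>I. w p * (norm (z p))\<^sup>2)"
    using norm_weighted_sum_squared_le[of I w z] w by (simp add: I_def)
  also have "(\<Sum>p\<in>I. w p) = 1"
    unfolding w_def I_def sum.cartesian_product' using N S_pos
    by (simp add: sum_divide_distrib[symmetric] sum_alpha)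
  also have "(\<Sum>p\<in>I. w p * (norm (z p))\<^sup>2) \<le> (\<Sum>p\<in>I. w p * (L\<^sup>2 * (norm (d p))\<^sup>2))"
  proof (intro sum_mono mult_left_mono w)
    fix p assume "p \<in> I"
    then obtain i q where p: "p = (i, q)" "i < N" unfolding I_def by auto
    have "norm (z p) \<le> L * norm (d p)"
      unfolding p z_def d_def using gF_lipschitz[OF p(2)] by simp
    then show "(norm (z p))\<^sup>2 \<le> L\<^sup>2 * (norm (d p))\<^sup>2"
      by (simp add: power_mono flip: power_mult_distrib)
  qed
  also have "\<dots> = L\<^sup>2 / (real N * S) * drift \<omega>"
    unfolding w_def d_def drift_def I_def sum.cartesian_product'
    by (simp add: sum_distrib_left mult_ac)
  finally show ?thesis by simp
qed

lemma AE_f_theta_next_le: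
  "AE \<omega> in M. f (theta_next \<omega>) \<le> f \<theta>0 - (\<eta> * S / 2) * (gf \<theta>0 \<bullet> (proj \<omega> *v gf \<theta>0))
      + \<eta> * L\<^sup>2 / real N * drift \<omega>
      + (L * \<eta>\<^sup>2 * S - \<eta>) * ((proj \<omega> *v gf \<theta>0) \<bullet> avg_noise \<omega>) + L * \<eta>\<^sup>2 * (norm (avg_noise \<omega>))\<^sup>2"
  using AE_orthogonal_projection_proj
proof eventually_elim
  case (elim \<omega>)
  have "f (theta_next \<omega>) \<le> f \<theta>0 + gf \<theta>0 \<bullet> (theta_next \<omega> - \<theta>0) + L / 2 * (norm (theta_next \<omega> - \<theta>0))\<^sup>2"
    using L_smooth_upper_bound[OF f_smooth, of \<theta>0 "theta_next \<omega> - \<theta>0"] by simp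
  also have "\<dots> \<le> f \<theta>0 - (\<eta> * S / 2) * (gf \<theta>0 \<bullet> (proj \<omega> *v gf \<theta>0)) + \<eta> * S * (norm (avg_grad \<omega> - gf \<theta>0))\<^sup>2
      + (L * \<eta>\<^sup>2 * S - \<eta>) * ((proj \<omega> *v gf \<theta>0) \<bullet> avg_noise \<omega>) + L * \<eta>\<^sup>2 * (norm (avg_noise \<omega>))\<^sup>2"
    using orthogonal_projection_step_le[OF elim, of \<eta> S L "gf \<theta>0" "avg_grad \<omega>" "avg_noise \<omega>"]
      eta_pos S_pos L_pos L_eta_S_le_1
    unfolding theta_next_diff_eq by simp
  also have "\<eta> * S * (norm (avg_grad \<omega> - gf \<theta>0))\<^sup>2 \<le> \<eta> * L\<^sup>2 / real N * drift \<omega>"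
    using mult_left_mono[OF norm_avg_grad_diff_le, of "\<eta> * S"] eta_pos S_pos N_pos
    by (simp add: field_simps)
  finally show ?case by simp
qed

lemma integral_quadratic_form_proj:
  shows "integrable M (\<lambda>\<omega>. x \<bullet> (proj \<omega> *v x))"
    and "(\<integral>\<omega>. x \<bullet> (proj \<omega> *v x) \<partial>M) = real CARD('r) / real CARD('d) * (norm x)\<^sup>2"
proof -
  have h: "(\<lambda>Q::real^'r^'d. x \<bullet> ((Q ** transpose Q) *v x)) \<in> borel_measurable borel"
    unfolding quadratic_form_eq_sum_entries
    by (intro borel_measurable_sum borel_measurable_times borel_measurable_const
        borel_measurable_projection_entry)
  show "integrable M (\<lambda>\<omega>. x \<bullet> (proj \<omega> *v x))"
    using haar_stiefel_integral_projection_quadratic_form(1)[OF P_haar, of x]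
    unfolding proj_def integrable_distr_eq[OF P_meas h] .
  show "(\<integral>\<omega>. x \<bullet> (proj \<omega> *v x) \<partial>M) = real CARD('r) / real CARD('d) * (norm x)\<^sup>2"
    using haar_stiefel_integral_projection_quadratic_form(2)[OF P_haar, of x]
    unfolding proj_def integral_distr[OF P_meas h] .
qed

lemma avg_noise_inner_eq:
  "v \<bullet> avg_noise \<omega> = (1 / real N) * (\<Sum>i<N. \<Sum>q<\<tau>. \<alpha> q * (v \<bullet> noise i q \<omega>))"
  unfolding avg_noise_def by (simp add: inner_sum_right)

lemma integral_cross_term:
  shows "integrable M (\<lambda>\<omega>. (proj \<omega> *v v) \<bullet> avg_noise \<omega>)"
    and "(\<integral>\<omega>. (proj \<omega> *v v) \<bullet> avg_noise \<omega> \<partial>M) = 0"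
proof -
  have sq: "square_integrable M (\<lambda>\<omega>. proj \<omega> *v v)"
    by (intro square_integrable_proj_mult square_integrable_const finite_measure_M)
  have int: "integrable M (\<lambda>\<omega>. (proj \<omega> *v v) \<bullet> noise i q \<omega>)" if "i < N" "q < \<tau>" for i q
    using integrable_inner_square_integrable[OF sq square_integrable_noise[OF that]] .
  show "integrable M (\<lambda>\<omega>. (proj \<omega> *v v) \<bullet> avg_noise \<omega>)"
    unfolding avg_noise_inner_eq using int by (intro integrable_mult_right integral_double_sum) auto
  have "(\<integral>\<omega>. (proj \<omega> *v v) \<bullet> noise i q \<omega> \<partial>M) = 0" if "i < N" "q < \<tau>" for i q
    using that sq proj_measurable[OF P_measurable_info]
    by (intro integral_inner_noise_eq_0 borel_measurable_matrix_vector_mult) auto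
  then show "(\<integral>\<omega>. (proj \<omega> *v v) \<bullet> avg_noise \<omega> \<partial>M) = 0"
    unfolding avg_noise_inner_eq
    using int integral_double_sum(2)[where A="{..<N}" and B="{..<\<tau>}" and M=M
        and h="\<lambda>i q \<omega>. (proj \<omega> *v v) \<bullet> noise i q \<omega>"]
    by simp
qed

lemma integral_norm_avg_noise_le:
  shows "integrable M (\<lambda>\<omega>. (norm (avg_noise \<omega>))\<^sup>2)"
    and "(\<integral>\<omega>. (norm (avg_noise \<omega>))\<^sup>2 \<partial>M) \<le> \<sigma>L\<^sup>2 * S\<^sup>2 / real N"
proof -
  define I :: "(nat \<times> nat) set" where "I = {..<N} \<times> {..<\<tau>}"
  define X where "X p = noise (fst p) (snd p)" for p
  define c :: "nat \<times> nat \<Rightarrow> real" where "c p = \<alpha> (snd p) / real N" for p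
  have N: "0 < real N" using N_pos by simp
  have avg: "avg_noise \<omega> = (\<Sum>p\<in>I. c p *\<^sub>R X p \<omega>)" for \<omega>
    unfolding avg_noise_def X_def c_def I_def
    by (simp add: sum.cartesian_product scaleR_sum_right split_def)
  have sq: "square_integrable M (X p)" if "p \<in> I" for p
    using that unfolding X_def I_def by (auto intro: square_integrable_noise)
  have "square_integrable M (\<lambda>\<omega>. \<Sum>p\<in>I. c p *\<^sub>R X p \<omega>)"
    using sq by (intro square_integrable_sum square_integrable_scaleR)
  then show "integrable M (\<lambda>\<omega>. (norm (avg_noise \<omega>))\<^sup>2)"
    unfolding avg square_integrable_def by simp
  have "(\<integral>\<omega>. (norm (avg_noise \<omega>))\<^sup>2 \<partial>M) = (\<Sum>p\<in>I. (c p)\<^sup>2 * (\<integral>\<omega>. (norm (X p \<omega>))\<^sup>2 \<partial>M))"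
    unfolding avg using sq integral_inner_noise_noise_eq_0 unfolding X_def I_def
    by (intro integral_norm_sum_orthogonal) (auto simp: prod_eq_iff)
  also have "\<dots> \<le> (\<Sum>p\<in>I. (c p)\<^sup>2 * \<sigma>L\<^sup>2)"
    unfolding X_def I_def by (intro sum_mono mult_left_mono integral_norm_noise_le) auto
  also have "\<dots> = (\<Sum>i<N. \<Sum>q<\<tau>. (\<alpha> q / real N)\<^sup>2 * \<sigma>L\<^sup>2)"
    unfolding c_def I_def sum.cartesian_product' by simp
  also have "\<dots> = (\<Sum>q<\<tau>. \<alpha> q * \<alpha> q) * \<sigma>L\<^sup>2 / real N"
    using N by (simp add: power2_eq_square sum_distrib_right[symmetric] sum_divide_distrib[symmetric])
  also have "\<dots> \<le> (\<Sum>q<\<tau>. \<alpha> q * S) * \<sigma>L\<^sup>2 / real N"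
    using alpha_nonneg alpha_le_S N
    by (intro divide_right_mono mult_right_mono sum_mono mult_left_mono) auto
  also have "\<dots> = \<sigma>L\<^sup>2 * S\<^sup>2 / real N"
    by (simp add: sum_distrib_right[symmetric] sum_alpha power2_eq_square)
  finally show "(\<integral>\<omega>. (norm (avg_noise \<omega>))\<^sup>2 \<partial>M) \<le> \<sigma>L\<^sup>2 * S\<^sup>2 / real N" .
qed

lemma integral_drift_le:
  shows "integrable M drift"
    and "(\<integral>\<omega>. drift \<omega> \<partial>M) \<le> real N * S * drift_bound"
proof -
  have int: "integrable M (\<lambda>\<omega>. (norm (theta i q \<omega> - \<theta>0))\<^sup>2)" if "i < N" "q < \<tau>" for i q
    using that by (intro integrable_norm_theta_diff) auto
  show "integrable M drift"
    unfolding drift_def[abs_def] using int by (intro integral_double_sum) auto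
  have "(\<integral>\<omega>. drift \<omega> \<partial>M) = (\<Sum>i<N. \<Sum>q<\<tau>. \<alpha> q * (\<integral>\<omega>. (norm (theta i q \<omega> - \<theta>0))\<^sup>2 \<partial>M))"
    unfolding drift_def
    using int integral_double_sum(2)[where A="{..<N}" and B="{..<\<tau>}" and M=M
        and h="\<lambda>i q \<omega>. (norm (theta i q \<omega> - \<theta>0))\<^sup>2"]
    by simp
  also have "\<dots> \<le> (\<Sum>i<N. \<Sum>q<\<tau>. \<alpha> q * drift_bound)"
    using integral_norm_theta_diff_le alpha_nonneg by (intro sum_mono mult_left_mono) auto
  also have "\<dots> = real N * S * drift_bound"
    by (simp add: sum_distrib_right[symmetric] sum_alpha)
  finally show "(\<integral>\<omega>. drift \<omega> \<partial>M) \<le> real N * S * drift_bound" .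
qed

lemma integrable_f_theta_next: "integrable M (\<lambda>\<omega>. f (theta_next \<omega>))"
proof -
  define u where "u \<omega> = theta_next \<omega> - \<theta>0" for \<omega>
  have u: "square_integrable M u"
    unfolding u_def theta_next_def using square_integrable_theta_diff
    by (auto intro!: square_integrable_scaleR square_integrable_sum)
  have "(\<lambda>\<omega>. f (\<theta>0 + u \<omega>)) \<in> borel_measurable M"
    using u unfolding square_integrable_def
    by (intro borel_measurable_continuous_on[OF L_smooth_continuous[OF f_smooth]]) auto
  moreover have "integrable M (\<lambda>\<omega>. \<bar>f \<theta>0\<bar> + norm (gf \<theta>0) * norm (u \<omega>) + L / 2 * (norm (u \<omega>))\<^sup>2)"
    using u square_integrable_integrable[OF finite_measure_M u] finite_measure_M
    unfolding square_integrable_def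
    by (intro Bochner_Integration.integrable_add integrable_mult_right integrable_norm
        finite_measure.integrable_const) auto
  moreover have "norm (f (\<theta>0 + u \<omega>)) \<le> norm (\<bar>f \<theta>0\<bar> + norm (gf \<theta>0) * norm (u \<omega>) + L / 2 * (norm (u \<omega>))\<^sup>2)"
    for \<omega>
  proof -
    have "\<bar>f (\<theta>0 + u \<omega>)\<bar> \<le> \<bar>f \<theta>0\<bar> + norm (gf \<theta>0) * norm (u \<omega>) + L / 2 * (norm (u \<omega>))\<^sup>2"
      using L_smooth_abs_le[OF f_smooth, of \<theta>0 "u \<omega>"] Cauchy_Schwarz_ineq2[of "gf \<theta>0" "u \<omega>"]
        abs_ge_self[of "f \<theta>0"] abs_ge_minus_self[of "f \<theta>0"]
      unfolding abs_le_iff by linarith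
    then show ?thesis using L_pos by simp
  qed
  ultimately show ?thesis
    unfolding u_def by (simp add: Bochner_Integration.integrable_bound)
qed

lemma integral_f_theta_next_le:
  "(\<integral>\<omega>. f (theta_next \<omega>) \<partial>M) \<le> f \<theta>0 - (\<eta> * S / 2) * (real CARD('r) / real CARD('d) * (norm (gf \<theta>0))\<^sup>2)
      + \<eta> * L\<^sup>2 / real N * (real N * S * drift_bound) + L * \<eta>\<^sup>2 * (\<sigma>L\<^sup>2 * S\<^sup>2 / real N)"
proof -
  define quad where "quad \<omega> = gf \<theta>0 \<bullet> (proj \<omega> *v gf \<theta>0)" for \<omega>
  define cross where "cross \<omega> = (proj \<omega> *v gf \<theta>0) \<bullet> avg_noise \<omega>" for \<omega>
  define noise_sq where "noise_sq \<omega> = (norm (avg_noise \<omega>))\<^sup>2" for \<omega>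
  note integrable =
    integral_quadratic_form_proj(1)[of "gf \<theta>0", folded quad_def]
    integral_cross_term(1)[of "gf \<theta>0", folded cross_def]
    integral_norm_avg_noise_le(1)[folded noise_sq_def]
    integral_drift_le(1)
    finite_measure.integrable_const[OF finite_measure_M]
  have "AE \<omega> in M. f (theta_next \<omega>) \<le> f \<theta>0 - (\<eta> * S / 2) * quad \<omega> + \<eta> * L\<^sup>2 / real N * drift \<omega>
      + (L * \<eta>\<^sup>2 * S - \<eta>) * cross \<omega> + L * \<eta>\<^sup>2 * noise_sq \<omega>"
    using AE_f_theta_next_le unfolding quad_def cross_def noise_sq_def .
  then have "(\<integral>\<omega>. f (theta_next \<omega>) \<partial>M) \<le> (\<integral>\<omega>. f \<theta>0 - (\<eta> * S / 2) * quad \<omega> + \<eta> * L\<^sup>2 / real N * drift \<omega>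
      + (L * \<eta>\<^sup>2 * S - \<eta>) * cross \<omega> + L * \<eta>\<^sup>2 * noise_sq \<omega> \<partial>M)"
    by (intro integral_mono_AE integrable_f_theta_next Bochner_Integration.integrable_add
        Bochner_Integration.integrable_diff integrable_mult_right integrable)
  also have "\<dots> = f \<theta>0 - (\<eta> * S / 2) * (\<integral>\<omega>. quad \<omega> \<partial>M) + \<eta> * L\<^sup>2 / real N * (\<integral>\<omega>. drift \<omega> \<partial>M)
      + (L * \<eta>\<^sup>2 * S - \<eta>) * (\<integral>\<omega>. cross \<omega> \<partial>M) + L * \<eta>\<^sup>2 * (\<integral>\<omega>. noise_sq \<omega> \<partial>M)"
    using prob_space.prob_space[OF M] by (simp add: integrable)
  also have "\<dots> \<le> f \<theta>0 - (\<eta> * S / 2) * (real CARD('r) / real CARD('d) * (norm (gf \<theta>0))\<^sup>2)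
      + \<eta> * L\<^sup>2 / real N * (real N * S * drift_bound) + L * \<eta>\<^sup>2 * (\<sigma>L\<^sup>2 * S\<^sup>2 / real N)"
    using integral_quadratic_form_proj(2)[of "gf \<theta>0", folded quad_def]
      integral_cross_term(2)[of "gf \<theta>0", folded cross_def]
      mult_left_mono[OF integral_norm_avg_noise_le(2)[folded noise_sq_def], of "L * \<eta>\<^sup>2"]
      mult_left_mono[OF integral_drift_le(2), of "\<eta> * L\<^sup>2 / real N"] eta_pos L_pos
    by simp
  finally show ?thesis .
qed

lemma drift_term_le:
  "\<eta> * L\<^sup>2 * S * drift_bound
    \<le> 12 * L\<^sup>2 * real \<tau> ^ 4 * \<eta> ^ 3 / ((1 - \<mu>) * (1 - \<mu>\<^sup>2)) * (\<sigma>L\<^sup>2 + \<sigma>G\<^sup>2 + (norm (gf \<theta>0))\<^sup>2)"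
proof -
  define s where "s = \<sigma>L\<^sup>2 + \<sigma>G\<^sup>2 + (norm (gf \<theta>0))\<^sup>2"
  have m1: "0 < 1 - \<mu>" using mu by simp
  have m2: "0 < 1 - \<mu>\<^sup>2" by (rule one_minus_square_pos[OF mu])
  have "\<eta> * L\<^sup>2 * S * drift_bound \<le> \<eta> * L\<^sup>2 * (real \<tau> / (1 - \<mu>)) * drift_bound"
    using S_tau_le[OF mu] eta_pos drift_bound_nonneg by (intro mult_right_mono mult_left_mono) auto
  also have "\<dots> = 12 * L\<^sup>2 * real \<tau> ^ 4 * \<eta> ^ 3 / ((1 - \<mu>) * (1 - \<mu>\<^sup>2)) * s"
    unfolding drift_bound_def s_def[symmetric] using m1 m2 by (simp add: field_simps eval_nat_numeral)
  finally show ?thesis unfolding s_def .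
qed

theorem expected_descent:
  "let \<delta> = real CARD('r) / real CARD('d)
   in integrable M (\<lambda>\<omega>. f (theta_next \<omega>)) \<and>
      (\<integral>\<omega>. f (theta_next \<omega>) \<partial>M) \<le> f \<theta>0
        - (\<delta> / 2 * \<eta> * S - 12 * L\<^sup>2 * real \<tau> ^ 4 * \<eta> ^ 3 / ((1 - \<mu>) * (1 - \<mu>\<^sup>2))) * (norm (gf \<theta>0))\<^sup>2
        + \<eta>\<^sup>2 * S\<^sup>2 * L * \<sigma>L\<^sup>2 / real N
        + 12 * L\<^sup>2 * real \<tau> ^ 4 * \<eta> ^ 3 / (\<delta> * (1 - \<mu>) * (1 - \<mu>\<^sup>2)) * (\<sigma>L\<^sup>2 + \<sigma>G\<^sup>2)"
proof -
  define \<delta> where "\<delta> = real CARD('r) / real CARD('d)"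
  define C where "C = 12 * L\<^sup>2 * real \<tau> ^ 4 * \<eta> ^ 3 / ((1 - \<mu>) * (1 - \<mu>\<^sup>2))"
  define G2 where "G2 = (norm (gf \<theta>0))\<^sup>2"
  define s where "s = \<sigma>L\<^sup>2 + \<sigma>G\<^sup>2"
  have \<delta>: "0 < \<delta>" "\<delta> \<le> 1"
    unfolding \<delta>_def using r_le_d by auto
  have "0 \<le> C"
    unfolding C_def using mu eta_pos one_minus_square_pos[OF mu] by simp
  then have C_le: "C * s \<le> C / \<delta> * s"
    using \<delta> by (intro mult_right_mono) (auto simp: s_def le_divide_eq mult_left_le)
  have "\<eta> * L\<^sup>2 * S * drift_bound \<le> C * (s + G2)"
    using drift_term_le unfolding C_def s_def G2_def .
  then have drift: "\<eta> * L\<^sup>2 * S * drift_bound \<le> C * s + C * G2"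
    by (simp add: distrib_left)
  have descent: "(\<integral>\<omega>. f (theta_next \<omega>) \<partial>M)
      \<le> f \<theta>0 - \<delta> / 2 * \<eta> * S * G2 + \<eta> * L\<^sup>2 * S * drift_bound + \<eta>\<^sup>2 * S\<^sup>2 * L * \<sigma>L\<^sup>2 / real N"
    using integral_f_theta_next_le N_pos unfolding \<delta>_def G2_def by (simp add: field_simps)
  have C_div: "12 * L\<^sup>2 * real \<tau> ^ 4 * \<eta> ^ 3 / (\<delta> * (1 - \<mu>) * (1 - \<mu>\<^sup>2)) = C / \<delta>"
    unfolding C_def by (simp add: mult.assoc)
  have "f \<theta>0 - (\<delta> / 2 * \<eta> * S - C) * G2 + \<eta>\<^sup>2 * S\<^sup>2 * L * \<sigma>L\<^sup>2 / real N + C / \<delta> * s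
      = f \<theta>0 - \<delta> / 2 * \<eta> * S * G2 + C * G2 + \<eta>\<^sup>2 * S\<^sup>2 * L * \<sigma>L\<^sup>2 / real N + C / \<delta> * s"
    by (simp add: algebra_simps)
  then show ?thesis
    unfolding Let_def \<delta>_def[symmetric] C_def[symmetric] G2_def[symmetric] s_def[symmetric] C_div
    using integrable_f_theta_next C_le drift descent by linarith
qed

end

theorem lemma4:
  fixes M :: "'w measure"
    and P :: "'w \<Rightarrow> real^'r^'d"
    and g :: "nat \<Rightarrow> nat \<Rightarrow> 'w \<Rightarrow> real^'d"
    and F :: "nat \<Rightarrow> real^'d \<Rightarrow> real" and gF :: "nat \<Rightarrow> real^'d \<Rightarrow> real^'d"
    and f :: "real^'d \<Rightarrow> real" and gf :: "real^'d \<Rightarrow> real^'d"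
    and N \<tau> :: nat and \<mu> \<eta> L \<sigma>L \<sigma>G :: real and \<theta>0 :: "real^'d"
  defines "f \<equiv> (\<lambda>\<theta>. (1 / real N) * (\<Sum>i<N. F i \<theta>))"
    and "gf \<equiv> (\<lambda>\<theta>. (1 / real N) *\<^sub>R (\<Sum>i<N. gF i \<theta>))"
  assumes N_pos: "N \<ge> 1" and tau_pos: "\<tau> \<ge> 1"
    and r_le_d: "CARD('r) \<le> CARD('d)"
    and mu: "0 \<le> \<mu>" "\<mu> < 1" and eta_pos: "\<eta> > 0" and L_pos: "L > 0"
    \<comment> \<open>A1\<close>
    and bdd_below: "\<exists>fstar. \<forall>\<theta>. f \<theta> \<ge> fstar"
    and f_smooth: "L_smooth L f gf"
    and F_smooth: "\<forall>i<N. L_smooth L (F i) (gF i)"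
    \<comment> \<open>round-t randomness: probability space, Haar projection, stochastic gradients\<close>
    and M: "prob_space M"
    and P_meas: "P \<in> borel_measurable M"
    and P_haar: "haar_stiefel (distr M borel P)"
    and g_meas: "\<forall>i<N. \<forall>s<\<tau>. g i s \<in> borel_measurable M"
    \<comment> \<open>A2: conditional unbiasedness and bounded conditional variance\<close>
    and unbiased: "\<forall>i<N. \<forall>s<\<tau>. integrable M (g i s) \<and>
        (\<forall>A \<in> sets (info_sigma M P g N \<tau> i s).
           (\<integral>\<omega>. indicator A \<omega> *\<^sub>R g i s \<omega> \<partial>M) =
           (\<integral>\<omega>. indicator A \<omega> *\<^sub>R
               gF i (fst (local_iter \<eta> \<mu> (P \<omega> ** transpose (P \<omega>)) (\<lambda>s'. g i s' \<omega>) \<theta>0 s)) \<partial>M))"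
    and var_bound: "\<forall>i<N. \<forall>s<\<tau>.
        integrable M (\<lambda>\<omega>. (norm (g i s \<omega> -
           gF i (fst (local_iter \<eta> \<mu> (P \<omega> ** transpose (P \<omega>)) (\<lambda>s'. g i s' \<omega>) \<theta>0 s))))\<^sup>2) \<and>
        (\<forall>A \<in> sets (info_sigma M P g N \<tau> i s).
           (\<integral>\<omega>. indicator A \<omega> * (norm (g i s \<omega> -
              gF i (fst (local_iter \<eta> \<mu> (P \<omega> ** transpose (P \<omega>)) (\<lambda>s'. g i s' \<omega>) \<theta>0 s))))\<^sup>2 \<partial>M)
           \<le> \<sigma>L\<^sup>2 * measure M A)"
    and heterogeneity: "\<forall>i<N. \<forall>\<theta>. (norm (gF i \<theta> - gf \<theta>))\<^sup>2 \<le> \<sigma>G\<^sup>2"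
    \<comment> \<open>step size\<close>
    and eta1: "\<eta> \<le> sqrt ((1 - \<mu>\<^sup>2) / (6 * L\<^sup>2 * real \<tau> ^ 3))"
    and eta2: "\<eta> \<le> 1 / (L * S_tau \<mu> \<tau>)"
  shows "let \<delta> = real CARD('r) / real CARD('d);
             S = S_tau \<mu> \<tau>;
             \<theta>next = (\<lambda>\<omega>. \<theta>0 + (1 / real N) *\<^sub>R (\<Sum>i<N.
                 fst (local_iter \<eta> \<mu> (P \<omega> ** transpose (P \<omega>)) (\<lambda>s. g i s \<omega>) \<theta>0 \<tau>) - \<theta>0))
         in integrable M (\<lambda>\<omega>. f (\<theta>next \<omega>)) \<and>
            (\<integral>\<omega>. f (\<theta>next \<omega>) \<partial>M) \<le> f \<theta>0
              - (\<delta> / 2 * \<eta> * S - 12 * L\<^sup>2 * real \<tau> ^ 4 * \<eta> ^ 3 / ((1 - \<mu>) * (1 - \<mu>\<^sup>2)))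
                  * (norm (gf \<theta>0))\<^sup>2
              + \<eta>\<^sup>2 * S\<^sup>2 * L * \<sigma>L\<^sup>2 / real N
              + 12 * L\<^sup>2 * real \<tau> ^ 4 * \<eta> ^ 3 / (\<delta> * (1 - \<mu>) * (1 - \<mu>\<^sup>2)) * (\<sigma>L\<^sup>2 + \<sigma>G\<^sup>2)"
proof -
  interpret fedslop_round M P g F gF f gf N \<tau> \<mu> \<eta> L \<sigma>L \<sigma>G \<theta>0
  proof (rule fedslop_round.intro)
    show "gf = (\<lambda>\<theta>. (1 / real N) *\<^sub>R (\<Sum>i<N. gF i \<theta>))"
      unfolding gf_def ..
  qed (fact N_pos tau_pos r_le_d mu eta_pos L_pos f_smooth F_smooth M P_meas P_haar g_meas unbiased
      var_bound heterogeneity eta1 eta2)+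
  have "(\<lambda>\<omega>. \<theta>0 + (1 / real N) *\<^sub>R (\<Sum>i<N.
      fst (local_iter \<eta> \<mu> (P \<omega> ** transpose (P \<omega>)) (\<lambda>s. g i s \<omega>) \<theta>0 \<tau>) - \<theta>0)) = theta_next"
    by (simp add: fun_eq_iff theta_next_def theta_def proj_def)
  then show ?thesis
    using expected_descent by (simp add: Let_def)
qed

end
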